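(* Let $\mathcal G=(V_{\mathrm{Max}},V_{\mathrm{Min}},T,E,w)$ be any shortest-path game. Then for every vertex $v\in V$, the deterministic value equals the memoryless upper value: $\mathrm{Val}^{\mathrm{d}}(v)=\overline{\mathrm{Val}}^{\mathrm{m}}(v)$ (as elements of $\mathbb Z\cup\{-\infty,+\infty\}$).
   Context: A shortest-path game (SPG) is a tuple $\mathcal G=(V_{\mathrm{Max}},V_{\mathrm{Min}},T,E,w)$ where $V=V_{\mathrm{Max}}\uplus V_{\mathrm{Min}}\uplus T$ is a finite set of vertices (owned by player Max, player Min, and target vertices respectively), $E\subseteq (V\setminus T)\times V$ is a set of directed edges such that every $v\in V\setminus T$ has at least one successor, and $w\colon E\to\mathbb Z$ is a weight function. A play from $v_0$ is either a finite path $v_0v_1\cdots v_k$ with $v_k\in T$ and $v_i\notin T$ for $i<k$, or an infinite path never visiting $T$. Its total payoff is $\mathrm{TP}(\pi)=\sum_{i=0}^{k-1}w(v_i,v_{i+1})$ in the first case and $+\infty$ in the second. A strategy of Min maps every finite path ending in a vertex $v\in V_{\mathrm{Min}}$ to a probability distribution on $V$ supported in the successors of $v$; strategies of Max are defined symmetrically for $V_{\mathrm{Max}}$. A strategy is deterministic if it always returns a Dirac distribution, and memoryless if its output depends only on the last vertex. For deterministic strategies $\sigma$ of Min and $\tau$ of Max there is a unique play $\mathrm{out}(v,\sigma,\tau)$ from $v$ conforming to both; define $\mathrm{Val}^{\sigma}(v)=\sup_{\tau}\mathrm{TP}(\mathrm{out}(v,\sigma,\tau))$ and $\mathrm{Val}^{\mathrm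 d}(v)=\inf_{\sigma}\mathrm{Val}^{\sigma}(v)$ (sup/inf over deterministic strategies; this equals $\sup_\tau\inf_\sigma$). For a memoryless strategy $\rho$ of Min and a memoryless strategy $\tau$ of Max one obtains a Markov chain on $V$ (from $v\in V_{\mathrm{Min}}$ move according to $\rho(v)$, from $v\in V_{\mathrm{Max}}$ according to $\tau(v)$, targets absorbing); write $\mathbb P^{\rho,\tau}_v$ for the induced probability measure on plays from $v$ and $\mathbb E^{\rho,\tau}_v(\mathrm{TP})$ for the expected total payoff (which is $+\infty$ if the target is missed with positive probability). Define $\mathrm{Val}^{\mathrm m,\rho}(v)=\sup_{\tau}\mathbb E^{\rho,\tau}_v(\mathrm{TP})$ over memoryless strategies $\tau$ of Max, and the memoryless upper value $\overline{\mathrm{Val}}^{\mathrm m}(v)=\inf_{\rho}\mathrm{Val}^{\mathrm m,\rho}(v)$ over memoryless strategies $\rho$ of Min. *)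

theory Defs
  imports "HOL-Probability.Probability"
begin

text \<open>Vertices form a finite type 'v; the vertex set V is UNIV, partitioned into
  VMax, VMin and the target set T.  Edges E, integer weights w (only relevant on E).\<close>

definition spg :: "'v::finite set \<Rightarrow> 'v set \<Rightarrow> 'v set \<Rightarrow> ('v \<times> 'v) set \<Rightarrow> bool" where
  "spg VMax VMin T E \<longleftrightarrow>
     VMax \<inter> VMin = {} \<and> VMax \<inter> T = {} \<and> VMin \<inter> T = {} \<and>
     VMax \<union> VMin \<union> T = UNIV \<and>
     E \<subseteq> (- T) \<times> UNIV \<and>
     (\<forall>v. v \<notin> T \<longrightarrow> (\<exists>u. (v, u) \<in> E))"

text \<open>Plays are encoded as infinite sequences in which a target vertex, once reached,
  is repeated forever (targets are absorbing). The finite play is the prefix up to and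
  including the first target visit.\<close>

definition TP :: "'v set \<Rightarrow> ('v \<times> 'v \<Rightarrow> int) \<Rightarrow> (nat \<Rightarrow> 'v) \<Rightarrow> ereal" where
  "TP T w x =
     (if \<exists>n. x n \<in> T
      then ereal (real_of_int (\<Sum>i < (LEAST n. x n \<in> T). w (x i, x (Suc i))))
      else \<infinity>)"

text \<open>A deterministic strategy maps a finite path (nonempty list, last element = current
  vertex) to a successor of the current vertex whenever the current vertex is owned
  by the player.\<close>

definition det_strategy :: "'v set \<Rightarrow> ('v \<times> 'v) set \<Rightarrow> ('v list \<Rightarrow> 'v) \<Rightarrow> bool" where
  "det_strategy VP E \<sigma> \<longleftrightarrow> (\<forall>h. h \<noteq> [] \<and> last h \<in> VP \<longrightarrow> (last h, \<sigma> h) \<in> E)"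

definition det_step :: "'v set \<Rightarrow> 'v set \<Rightarrow> ('v list \<Rightarrow> 'v) \<Rightarrow> ('v list \<Rightarrow> 'v) \<Rightarrow> 'v list \<Rightarrow> 'v" where
  "det_step VMin T \<sigma> \<tau> h =
     (if last h \<in> T then last h else if last h \<in> VMin then \<sigma> h else \<tau> h)"

primrec det_hist :: "'v set \<Rightarrow> 'v set \<Rightarrow> ('v list \<Rightarrow> 'v) \<Rightarrow> ('v list \<Rightarrow> 'v) \<Rightarrow> 'v \<Rightarrow> nat \<Rightarrow> 'v list" where
  "det_hist VMin T \<sigma> \<tau> v 0 = [v]"
| "det_hist VMin T \<sigma> \<tau> v (Suc n) =
     det_hist VMin T \<sigma> \<tau> v n @ [det_step VMin T \<sigma> \<tau> (det_hist VMin T \<sigma> \<tau> v n)]"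

text \<open>The unique play out(v, sigma, tau) (sigma: Min, tau: Max).\<close>
definition out :: "'v set \<Rightarrow> 'v set \<Rightarrow> 'v \<Rightarrow> ('v list \<Rightarrow> 'v) \<Rightarrow> ('v list \<Rightarrow> 'v) \<Rightarrow> nat \<Rightarrow> 'v" where
  "out VMin T v \<sigma> \<tau> n = last (det_hist VMin T \<sigma> \<tau> v n)"

definition Val_sigma ::
  "'v set \<Rightarrow> 'v set \<Rightarrow> 'v set \<Rightarrow> ('v \<times> 'v) set \<Rightarrow> ('v \<times> 'v \<Rightarrow> int) \<Rightarrow> ('v list \<Rightarrow> 'v) \<Rightarrow> 'v \<Rightarrow> ereal" where
  "Val_sigma VMax VMin T E w \<sigma> v =
     (SUP \<tau> \<in> {\<tau>. det_strategy VMax E \<tau>}. TP T w (out VMin T v \<sigma> \<tau>))"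

definition Val_d ::
  "'v set \<Rightarrow> 'v set \<Rightarrow> 'v set \<Rightarrow> ('v \<times> 'v) set \<Rightarrow> ('v \<times> 'v \<Rightarrow> int) \<Rightarrow> 'v \<Rightarrow> ereal" where
  "Val_d VMax VMin T E w v =
     (INF \<sigma> \<in> {\<sigma>. det_strategy VMin E \<sigma>}. Val_sigma VMax VMin T E w \<sigma> v)"

definition mless_strategy :: "'v set \<Rightarrow> ('v \<times> 'v) set \<Rightarrow> ('v \<Rightarrow> 'v pmf) \<Rightarrow> bool" where
  "mless_strategy VP E \<rho> \<longleftrightarrow> (\<forall>v \<in> VP. set_pmf (\<rho> v) \<subseteq> {u. (v, u) \<in> E})"

definition mc_kernel :: "'v set \<Rightarrow> 'v set \<Rightarrow> ('v \<Rightarrow> 'v pmf) \<Rightarrow> ('v \<Rightarrow> 'v pmf) \<Rightarrow> 'v \<Rightarrow> 'v pmf" where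
  "mc_kernel VMin T \<rho> \<tau> u =
     (if u \<in> T then return_pmf u else if u \<in> VMin then \<rho> u else \<tau> u)"

text \<open>Construction of the path measure of a finite Markov chain with kernel K
  (random mapping representation): draw i.i.d. random maps f_0, f_1, ... where
  f_n(u) ~ K(u) independently over u, and set X_0 = v, X_(n+1) = f_n(X_n).
  The law of (X_n)_n on the stream space is the Markov chain measure P_v.\<close>

primrec mc_traj :: "'v \<Rightarrow> ('v \<Rightarrow> 'v) stream \<Rightarrow> nat \<Rightarrow> 'v" where
  "mc_traj v \<omega> 0 = v"
| "mc_traj v \<omega> (Suc n) = (\<omega> !! n) (mc_traj v \<omega> n)"

definition mc_paths :: "('v::finite \<Rightarrow> 'v pmf) \<Rightarrow> 'v \<Rightarrow> 'v stream measure" where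
  "mc_paths K v =
     distr (stream_space (measure_pmf (Pi_pmf UNIV undefined K)))
           (stream_space (count_space UNIV))
           (\<lambda>\<omega>. to_stream (mc_traj v \<omega>))"

definition exp_TP :: "'v set \<Rightarrow> ('v \<times> 'v \<Rightarrow> int) \<Rightarrow> 'v stream measure \<Rightarrow> ereal" where
  "exp_TP T w M =
     (if emeasure M {s \<in> space M. \<forall>n. s !! n \<notin> T} \<noteq> 0 then \<infinity>
      else enn2ereal (\<integral>\<^sup>+ s. ennreal (max 0 (real_of_ereal (TP T w (snth s)))) \<partial>M)
         - enn2ereal (\<integral>\<^sup>+ s. ennreal (max 0 (- real_of_ereal (TP T w (snth s)))) \<partial>M))"

definition Val_m_rho ::
  "'v::finite set \<Rightarrow> 'v set \<Rightarrow> 'v set \<Rightarrow> ('v \<times> 'v) set \<Rightarrow> ('v \<times> 'v \<Rightarrow> int) \<Rightarrow> ('v \<Rightarrow> 'v pmf) \<Rightarrow> 'v \<Rightarrow> ereal" where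
  "Val_m_rho VMax VMin T E w \<rho> v =
     (SUP \<tau> \<in> {\<tau>. mless_strategy VMax E \<tau>}. exp_TP T w (mc_paths (mc_kernel VMin T \<rho> \<tau>) v))"

definition Val_m_upper ::
  "'v::finite set \<Rightarrow> 'v set \<Rightarrow> 'v set \<Rightarrow> ('v \<times> 'v) set \<Rightarrow> ('v \<times> 'v \<Rightarrow> int) \<Rightarrow> 'v \<Rightarrow> ereal" where
  "Val_m_upper VMax VMin T E w v =
     (INF \<rho> \<in> {\<rho>. mless_strategy VMin E \<rho>}. Val_m_rho VMax VMin T E w \<rho> v)"

end

theory Submission
  imports Defs
begin

(* Both values equal X = inf_k X_k (lim_val), where X_k (horizon_val k) is given by value iteration
   for the game in which Min must reach the target within k steps (payoff +\<infinity> otherwise); X_k is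
   antitone in k and takes integer values or +\<infinity>.

   Lower bounds: a memoryless deterministic Max strategy attaining the Bellman inequality for X
   makes X(x_i) \<le> w(x_i, x_(i+1)) + X(x_(i+1)) along every play consistent with it, so X \<le> TP by
   telescoping; against a memoryless randomised Min strategy this holds almost surely.

   Upper bounds: with history, Min plays the k-step optimal strategy and guarantees TP \<le> X_k.
   Memorylessly, Min mixes at every vertex a k-step optimal move (probability 1 - \<delta>) with a move
   decreasing the attractor rank (probability \<delta>). From every vertex with X_k < \<infinity> the target is
   then reached within k + 1 steps with probability at least \<delta>^k, and X_k plus a small multiple of
   the least j with X_j = X_k is a potential that decreases in expectation along each step, so the
   expected payoff is at most X_k + \<epsilon>. *)

section \<open>The path measure of a finite Markov chain\<close>

abbreviation path_space :: "'v stream measure" where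
  "path_space \<equiv> stream_space (count_space UNIV)"

abbreviation random_maps :: "('v::finite \<Rightarrow> 'v pmf) \<Rightarrow> ('v \<Rightarrow> 'v) stream measure" where
  "random_maps K \<equiv> stream_space (measure_pmf (Pi_pmf UNIV undefined K))"

lemma measurable_mc_traj: "(\<lambda>\<omega>. mc_traj v \<omega> n) \<in> measurable (random_maps K) (count_space UNIV)"
proof (induction n)
  case (Suc n)
  have "(\<lambda>\<omega>. \<omega> !! n) \<in> measurable (random_maps K) (count_space UNIV)"
    using measurable_snth[of n "measure_pmf (Pi_pmf UNIV undefined K)"] by simp
  then have "(\<lambda>\<omega>. (\<omega> !! n) i) \<in> measurable (random_maps K) (count_space UNIV)" for i
    by (rule measurable_compose) simp
  then show ?case
    by (simp add: measurable_compose_countable'[OF _ Suc, of "\<lambda>i \<omega>. (\<omega> !! n) i"])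
qed simp

lemma measurable_to_stream_mc_traj:
  "(\<lambda>\<omega>. to_stream (mc_traj v \<omega>)) \<in> measurable (random_maps K) path_space"
  by (rule measurable_stream_space2) (simp add: to_stream_def measurable_mc_traj)

lemma prob_space_mc_paths: "prob_space (mc_paths K v)"
  unfolding mc_paths_def
  by (intro prob_space.prob_space_distr prob_space.prob_space_stream_space
      prob_space_measure_pmf measurable_to_stream_mc_traj)

lemma sets_mc_paths [simp, measurable_cong]: "sets (mc_paths K v) = sets path_space"
  unfolding mc_paths_def by simp

lemma space_mc_paths [simp]: "space (mc_paths K v) = space path_space"
  unfolding mc_paths_def by simp

lemma measure_mc_paths_space [simp]: "measure (mc_paths K v) (space path_space) = 1"
  using prob_space.prob_space[OF prob_space_mc_paths] by simp

lemma measurable_Cons_mc_paths: "(##) u \<in> measurable (mc_paths K v) path_space"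
  by (simp add: measurable_cong_sets[OF sets_mc_paths refl])

lemma to_stream_mc_traj_Cons:
  "to_stream (mc_traj u (f ## \<omega>)) = u ## to_stream (mc_traj (f u) \<omega>)"
proof -
  have "mc_traj u (f ## \<omega>) (Suc n) = mc_traj (f u) \<omega> n" for n
    by (induction n) auto
  then have "mc_traj u (f ## \<omega>) = case_nat u (mc_traj (f u) \<omega>)"
    by (auto simp: fun_eq_iff split: nat.split)
  then show ?thesis by (simp add: to_stream_nat_case)
qed

lemma nn_integral_mc_paths_first_step:
  assumes f [measurable]: "f \<in> borel_measurable path_space"
  shows "(\<integral>\<^sup>+s. f s \<partial>mc_paths K u) =
     (\<integral>\<^sup>+u'. (\<integral>\<^sup>+s. f (u ## s) \<partial>mc_paths K u') \<partial>measure_pmf (K u))"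
proof -
  let ?P = "Pi_pmf UNIV undefined K"
  note traj = measurable_to_stream_mc_traj[where K = K]
  have "(\<integral>\<^sup>+s. f s \<partial>mc_paths K u) = (\<integral>\<^sup>+\<omega>. f (to_stream (mc_traj u \<omega>)) \<partial>random_maps K)"
    unfolding mc_paths_def by (rule nn_integral_distr[OF traj]) simp
  also have "\<dots> = (\<integral>\<^sup>+g. (\<integral>\<^sup>+\<omega>. f (to_stream (mc_traj u (g ## \<omega>))) \<partial>random_maps K) \<partial>measure_pmf ?P)"
    by (rule prob_space.nn_integral_stream_space[OF prob_space_measure_pmf])
      (rule measurable_compose[OF traj f])
  also have "\<dots> = (\<integral>\<^sup>+g. (\<integral>\<^sup>+s. f (u ## s) \<partial>mc_paths K (g u)) \<partial>measure_pmf ?P)"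
    unfolding to_stream_mc_traj_Cons mc_paths_def
    by (intro nn_integral_cong nn_integral_distr[OF traj, symmetric]) simp
  also have "\<dots> = (\<integral>\<^sup>+u'. (\<integral>\<^sup>+s. f (u ## s) \<partial>mc_paths K u') \<partial>measure_pmf (map_pmf (\<lambda>g. g u) ?P))"
    by (simp add: map_pmf_rep_eq nn_integral_distr)
  also have "map_pmf (\<lambda>g. g u) ?P = K u"
    by (simp add: Pi_pmf_component)
  finally show ?thesis .
qed

lemma prob_space_distr_Cons: "prob_space (distr (mc_paths K v) path_space ((##) u))"
  by (rule prob_space.prob_space_distr[OF prob_space_mc_paths measurable_Cons_mc_paths])

lemma measurable_mc_paths_Cons:
  "(\<lambda>u'. distr (mc_paths K u') path_space ((##) u)) \<in> measurable (measure_pmf p) (subprob_algebra path_space)"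
  by (auto simp: space_subprob_algebra intro: prob_space_imp_subprob_space prob_space_distr_Cons)

lemma mc_paths_bind:
  "mc_paths K u = measure_pmf (K u) \<bind> (\<lambda>u'. distr (mc_paths K u') path_space ((##) u))"
proof (rule measure_eqI)
  show "sets (mc_paths K u) = sets (measure_pmf (K u) \<bind> (\<lambda>u'. distr (mc_paths K u') path_space ((##) u)))"
    by (subst sets_bind[where N = path_space]) auto
next
  fix X assume "X \<in> sets (mc_paths K u)"
  then have X [measurable]: "X \<in> sets path_space" by simp
  have "emeasure (mc_paths K u) X = (\<integral>\<^sup>+s. indicator X s \<partial>mc_paths K u)"
    by simp
  also have "\<dots> = (\<integral>\<^sup>+u'. (\<integral>\<^sup>+s. indicator X (u ## s) \<partial>mc_paths K u') \<partial>measure_pmf (K u))"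
    by (rule nn_integral_mc_paths_first_step) simp
  also have "\<dots> = (\<integral>\<^sup>+u'. emeasure (distr (mc_paths K u') path_space ((##) u)) X \<partial>measure_pmf (K u))"
    using X measurable_Cons_mc_paths
    by (intro nn_integral_cong)
      (simp add: nn_integral_distr[OF measurable_Cons_mc_paths] nn_integral_indicator[symmetric]
        del: nn_integral_indicator)
  also have "\<dots> = emeasure (measure_pmf (K u) \<bind> (\<lambda>u'. distr (mc_paths K u') path_space ((##) u))) X"
    by (rule emeasure_bind[symmetric, OF _ measurable_mc_paths_Cons X]) simp
  finally show "emeasure (mc_paths K u) X =
      emeasure (measure_pmf (K u) \<bind> (\<lambda>u'. distr (mc_paths K u') path_space ((##) u))) X" .
qed

lemma integral_mc_paths_first_step:
  fixes f :: "'v::finite stream \<Rightarrow> real"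
  assumes f [measurable]: "f \<in> borel_measurable path_space" and bounded: "\<And>s. \<bar>f s\<bar> \<le> B"
  shows "(\<integral>s. f s \<partial>mc_paths K u) = (\<integral>u'. (\<integral>s. f (u ## s) \<partial>mc_paths K u') \<partial>measure_pmf (K u))"
proof -
  have "(\<integral>s. f s \<partial>mc_paths K u) =
      (\<integral>u'. (\<integral>s. f s \<partial>distr (mc_paths K u') path_space ((##) u)) \<partial>measure_pmf (K u))"
  proof (subst mc_paths_bind, rule integral_bind[OF f _ measurable_mc_paths_Cons, where B = B and B' = 1])
    show "AE u' in measure_pmf (K u).
        emeasure (distr (mc_paths K u') path_space ((##) u)) (space (distr (mc_paths K u') path_space ((##) u))) \<le> ennreal 1"
      unfolding ennreal_1
      by (intro AE_I2 subprob_space.emeasure_space_le_1 prob_space_imp_subprob_space prob_space_distr_Cons)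
  qed (use bounded measure_pmf.finite_measure_axioms in auto)
  also have "\<dots> = (\<integral>u'. (\<integral>s. f (u ## s) \<partial>mc_paths K u') \<partial>measure_pmf (K u))"
    by (intro Bochner_Integration.integral_cong refl integral_distr measurable_Cons_mc_paths) simp
  finally show ?thesis .
qed

definition kernel_path :: "('v \<Rightarrow> 'v pmf) \<Rightarrow> 'v \<Rightarrow> 'v stream \<Rightarrow> bool" where
  "kernel_path K u s \<longleftrightarrow> shd s = u \<and> (\<forall>i. s !! Suc i \<in> set_pmf (K (s !! i)))"

lemma AE_kernel_path: "AE s in mc_paths K u. kernel_path K u s"
proof -
  let ?P = "Pi_pmf UNIV undefined K"
  have "AE \<omega> in random_maps K. stream_all (\<lambda>g. g \<in> set_pmf ?P) \<omega>"
    by (rule prob_space.AE_stream_all[OF prob_space_measure_pmf]) (auto simp: AE_measure_pmf)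
  then have "AE \<omega> in random_maps K. kernel_path K u (to_stream (mc_traj u \<omega>))"
    by (rule AE_mp)
      (auto simp: stream_all_def set_Pi_pmf PiE_dflt_def kernel_path_def to_stream_def)
  moreover have "Measurable.pred path_space (kernel_path K u)"
    unfolding kernel_path_def by measurable
  ultimately show ?thesis
    unfolding mc_paths_def by (simp add: AE_distr_iff[OF measurable_to_stream_mc_traj])
qed

section \<open>Expected total payoff\<close>

lemma measurable_snth_pair [measurable]:
  "(\<lambda>s. (s !! i, s !! Suc i)) \<in> measurable (path_space :: 'v::countable stream measure) (count_space UNIV)"
proof -
  have "(\<lambda>s. (s !! i, s !! Suc i)) \<in> measurable path_space (count_space UNIV \<Otimes>\<^sub>M count_space (UNIV :: 'v set))"
    by measurable
  then show ?thesis by (simp add: pair_measure_countable)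
qed

lemma borel_measurable_TP [measurable]:
  "(\<lambda>s. TP T w (snth s)) \<in> borel_measurable (path_space :: 'v::countable stream measure)"
proof -
  have [measurable]: "(\<lambda>s. real_of_int (w (s !! i, s !! Suc i))) \<in> borel_measurable path_space" for i
    by (rule measurable_compose[OF measurable_snth_pair]) simp
  have [measurable]: "(\<lambda>s. ereal (real_of_int (\<Sum>i<k. w (s !! i, s !! Suc i))))
      \<in> borel_measurable (path_space :: 'v stream measure)" for k
    unfolding of_int_sum by measurable
  have "(\<lambda>s. (\<lambda>k. ereal (real_of_int (\<Sum>i<k. w (s !! i, s !! Suc i)))) (LEAST n. s !! n \<in> T))
      \<in> borel_measurable (path_space :: 'v stream measure)"
    by (rule measurable_compose_countable'[where I = UNIV]) auto
  then show ?thesis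
    unfolding TP_def by measurable
qed

definition avoids :: "'v set \<Rightarrow> nat \<Rightarrow> 'v stream set" where
  "avoids T N = {s. \<forall>i<N. s !! i \<notin> T}"

lemma sets_avoids [measurable]: "avoids T N \<in> sets (path_space :: 'v::countable stream measure)"
proof -
  have "avoids T N = {s \<in> space path_space. \<forall>i<N. s !! i \<notin> T}"
    by (auto simp: avoids_def space_stream_space)
  also have "\<dots> \<in> sets (path_space :: 'v stream measure)"
    by measurable
  finally show ?thesis .
qed

lemma Cons_in_avoids_Suc: "u ## s \<in> avoids T (Suc N) \<longleftrightarrow> u \<notin> T \<and> s \<in> avoids T N"
  by (auto simp: avoids_def less_Suc_eq_0_disj)

abbreviation avoid_prob :: "('v::finite \<Rightarrow> 'v pmf) \<Rightarrow> 'v set \<Rightarrow> nat \<Rightarrow> 'v \<Rightarrow> real" where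
  "avoid_prob K T N u \<equiv> measure (mc_paths K u) (avoids T N)"

lemma avoid_prob_0 [simp]: "avoid_prob K T 0 u = 1"
proof -
  interpret prob_space "mc_paths K u" by (rule prob_space_mc_paths)
  have "avoids T 0 = space (mc_paths K u)"
    by (auto simp: avoids_def space_stream_space)
  then show ?thesis using prob_space by simp
qed

lemma avoid_prob_le_1: "avoid_prob K T N u \<le> 1"
  using prob_space.prob_le_1[OF prob_space_mc_paths] by blast

lemma avoid_prob_Suc:
  "avoid_prob K T (Suc N) u = (if u \<in> T then 0 else \<integral>u'. avoid_prob K T N u' \<partial>measure_pmf (K u))"
proof -
  have ind: "(\<integral>s. indicator (avoids T N) s \<partial>mc_paths K v) = avoid_prob K T N v" for v N
  proof -
    interpret prob_space "mc_paths K v" by (rule prob_space_mc_paths)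
    show ?thesis by (simp add: emeasure_eq_measure)
  qed
  have "avoid_prob K T (Suc N) u =
      (\<integral>u'. (\<integral>s. indicator (avoids T (Suc N)) (u ## s) \<partial>mc_paths K u') \<partial>measure_pmf (K u))"
    unfolding ind[symmetric]
    by (rule integral_mc_paths_first_step[where B = 1]) (auto split: split_indicator)
  also have "\<dots> = (if u \<in> T then 0 else \<integral>u'. avoid_prob K T N u' \<partial>measure_pmf (K u))"
    by (auto simp: indicator_def Cons_in_avoids_Suc ind[symmetric] simp del: indicator_simps)
  finally show ?thesis .
qed

lemma avoid_prob_Suc_le:
  assumes "u \<notin> T" and "\<And>u'. u' \<in> set_pmf (K u) \<Longrightarrow> avoid_prob K T N u' \<le> c"
  shows "avoid_prob K T (Suc N) u \<le> c"
  using assms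
  by (simp add: avoid_prob_Suc measure_pmf.integral_le_const AE_measure_pmf_iff integrable_measure_pmf_finite)

lemma avoid_prob_add_le:
  assumes closed: "\<And>u. u \<in> A \<Longrightarrow> set_pmf (K u) \<subseteq> A"
    and bound: "\<And>u. u \<in> A \<Longrightarrow> avoid_prob K T m u \<le> q"
  shows "u \<in> A \<Longrightarrow> avoid_prob K T (m + k) u \<le> avoid_prob K T k u * q"
proof (induction k arbitrary: u)
  case (Suc k)
  show ?case
  proof (cases "u \<in> T")
    case False
    have "avoid_prob K T (m + Suc k) u = (\<integral>u'. avoid_prob K T (m + k) u' \<partial>measure_pmf (K u))"
      using False by (simp add: avoid_prob_Suc)
    also have "\<dots> \<le> (\<integral>u'. avoid_prob K T k u' * q \<partial>measure_pmf (K u))"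
      using Suc.IH closed[OF Suc.prems]
      by (intro integral_mono_AE) (auto simp: AE_measure_pmf_iff integrable_measure_pmf_finite)
    also have "\<dots> = avoid_prob K T (Suc k) u * q"
      using False by (simp add: avoid_prob_Suc)
    finally show ?thesis .
  qed (simp add: avoid_prob_Suc)
qed (use bound in simp)

lemma avoid_prob_mult_le:
  assumes closed: "\<And>u. u \<in> A \<Longrightarrow> set_pmf (K u) \<subseteq> A"
    and bound: "\<And>u. u \<in> A \<Longrightarrow> avoid_prob K T m u \<le> q" and "0 \<le> q"
  shows "u \<in> A \<Longrightarrow> avoid_prob K T (j * m) u \<le> q ^ j"
proof (induction j arbitrary: u)
  case (Suc j)
  have "avoid_prob K T (Suc j * m) u = avoid_prob K T (m + j * m) u"
    by (simp add: add.commute)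
  also have "\<dots> \<le> avoid_prob K T (j * m) u * q"
    by (rule avoid_prob_add_le[OF closed bound Suc.prems])
  also have "\<dots> \<le> q ^ Suc j"
    using mult_right_mono[OF Suc.IH[OF Suc.prems] \<open>0 \<le> q\<close>] by (simp add: mult.commute)
  finally show ?case .
qed simp

fun trunc_payoff :: "'v set \<Rightarrow> ('v \<times> 'v \<Rightarrow> int) \<Rightarrow> ('v \<Rightarrow> real) \<Rightarrow> nat \<Rightarrow> 'v stream \<Rightarrow> real" where
  "trunc_payoff T w \<phi> 0 s = \<phi> (shd s)"
| "trunc_payoff T w \<phi> (Suc N) s = (if shd s \<in> T then \<phi> (shd s)
     else real_of_int (w (shd s, shd (stl s))) + trunc_payoff T w \<phi> N (stl s))"

lemma borel_measurable_trunc_payoff [measurable]: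
  "trunc_payoff T w \<phi> N \<in> borel_measurable (path_space :: 'v::countable stream measure)"
proof (induction N)
  case 0
  show ?case by (simp add: measurable_compose[OF measurable_shd])
next
  case (Suc N)
  have [measurable]: "(\<lambda>s. real_of_int (w (shd s, shd (stl s)))) \<in> borel_measurable (path_space :: 'v stream measure)"
    using measurable_compose[OF measurable_snth_pair[of 0], of "\<lambda>e. real_of_int (w e)"] by simp
  have [measurable]: "(\<lambda>s. \<phi> (shd s)) \<in> borel_measurable (path_space :: 'v stream measure)"
    by (simp add: measurable_compose[OF measurable_shd])
  have [measurable]: "(\<lambda>s. trunc_payoff T w \<phi> N (stl s)) \<in> borel_measurable (path_space :: 'v stream measure)"
    by (rule measurable_compose[OF measurable_stl Suc])
  show ?case by simp
qed

lemma trunc_payoff_eq: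
  assumes "k \<le> N" and "\<forall>i<k. s !! i \<notin> T" and "k = N \<or> s !! k \<in> T"
  shows "trunc_payoff T w \<phi> N s = (\<Sum>i<k. real_of_int (w (s !! i, s !! Suc i))) + \<phi> (s !! k)"
  using assms
proof (induction N arbitrary: s k)
  case (Suc N)
  show ?case
  proof (cases "shd s \<in> T")
    case True
    then have "k = 0" using Suc.prems(2) by (cases k) auto
    then show ?thesis using True by simp
  next
    case False
    then obtain k' where k: "k = Suc k'" using Suc.prems(3) by (cases k) auto
    have "trunc_payoff T w \<phi> N (stl s) =
        (\<Sum>i<k'. real_of_int (w (stl s !! i, stl s !! Suc i))) + \<phi> (stl s !! k')"
      using Suc.prems k by (intro Suc.IH) auto
    then show ?thesis using False
      by (simp add: k sum.lessThan_Suc_shift del: sum.lessThan_Suc)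
  qed
qed simp

lemma abs_trunc_payoff_le:
  fixes w :: "'v::finite \<times> 'v \<Rightarrow> int"
  shows "\<bar>trunc_payoff T w \<phi> N s\<bar> \<le> real N * (\<Sum>e\<in>UNIV. \<bar>real_of_int (w e)\<bar>) + (\<Sum>u\<in>UNIV. \<bar>\<phi> u\<bar>)"
proof (induction N arbitrary: s)
  case 0
  show ?case using member_le_sum[of "shd s" UNIV "\<lambda>u. \<bar>\<phi> u\<bar>"] by simp
next
  case (Suc N)
  have w: "\<bar>real_of_int (w e)\<bar> \<le> (\<Sum>e\<in>UNIV. \<bar>real_of_int (w e)\<bar>)" for e
    by (rule member_le_sum) auto
  have \<phi>: "\<bar>\<phi> u\<bar> \<le> (\<Sum>u\<in>UNIV. \<bar>\<phi> u\<bar>)" for u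
    by (rule member_le_sum) auto
  have "0 \<le> (\<Sum>e\<in>UNIV. \<bar>real_of_int (w e)\<bar>)" "0 \<le> real N * (\<Sum>e\<in>UNIV. \<bar>real_of_int (w e)\<bar>)"
    by (simp_all add: sum_nonneg)
  then show ?case
    using Suc.IH[of "stl s"] w[of "(shd s, shd (stl s))"] \<phi>[of "shd s"]
      abs_triangle_ineq[of "real_of_int (w (shd s, shd (stl s)))" "trunc_payoff T w \<phi> N (stl s)"]
    by (cases "shd s \<in> T"; simp add: distrib_right; linarith)
qed

lemma integral_trunc_payoff_Cons:
  fixes w :: "'v::finite \<times> 'v \<Rightarrow> int"
  assumes "u \<notin> T"
  shows "(\<integral>s. trunc_payoff T w \<phi> (Suc N) (u ## s) \<partial>mc_paths K u')
    = real_of_int (w (u, u')) + (\<integral>s. trunc_payoff T w \<phi> N s \<partial>mc_paths K u')"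
proof -
  interpret prob_space "mc_paths K u'" by (rule prob_space_mc_paths)
  have "integrable (mc_paths K u') (trunc_payoff T w \<phi> N)"
    by (intro integrable_const_bound[OF AE_I2]) (auto intro: abs_trunc_payoff_le)
  moreover have "(\<integral>s. trunc_payoff T w \<phi> (Suc N) (u ## s) \<partial>mc_paths K u') =
      (\<integral>s. real_of_int (w (u, u')) + trunc_payoff T w \<phi> N s \<partial>mc_paths K u')"
    using AE_kernel_path[of K u'] assms by (intro integral_cong_AE) (auto simp: kernel_path_def)
  ultimately show ?thesis
    by simp
qed

lemma integral_trunc_payoff_le:
  fixes K :: "'v::finite \<Rightarrow> 'v pmf" and \<phi> :: "'v \<Rightarrow> real"
  assumes closed: "\<And>u. u \<in> A \<Longrightarrow> set_pmf (K u) \<subseteq> A"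
    and potential: "\<And>u. u \<in> A \<Longrightarrow> u \<notin> T \<Longrightarrow>
      (\<integral>u'. real_of_int (w (u, u')) + \<phi> u' \<partial>measure_pmf (K u)) \<le> \<phi> u"
  shows "u \<in> A \<Longrightarrow> (\<integral>s. trunc_payoff T w \<phi> N s \<partial>mc_paths K u) \<le> \<phi> u"
proof (induction N arbitrary: u)
  case 0
  interpret prob_space "mc_paths K u" by (rule prob_space_mc_paths)
  have "(\<integral>s. trunc_payoff T w \<phi> 0 s \<partial>mc_paths K u) = (\<integral>s. \<phi> u \<partial>mc_paths K u)"
    using AE_kernel_path[of K u] by (intro integral_cong_AE) (auto simp: kernel_path_def)
  then show ?case using prob_space by simp
next
  case (Suc N)
  have first_step: "(\<integral>s. trunc_payoff T w \<phi> (Suc N) s \<partial>mc_paths K u) =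
      (\<integral>u'. (\<integral>s. trunc_payoff T w \<phi> (Suc N) (u ## s) \<partial>mc_paths K u') \<partial>measure_pmf (K u))"
    by (rule integral_mc_paths_first_step[OF _ abs_trunc_payoff_le]) simp
  show ?case
  proof (cases "u \<in> T")
    case False
    have "(\<integral>u'. real_of_int (w (u, u')) + (\<integral>s. trunc_payoff T w \<phi> N s \<partial>mc_paths K u') \<partial>measure_pmf (K u))
        \<le> (\<integral>u'. real_of_int (w (u, u')) + \<phi> u' \<partial>measure_pmf (K u))"
      using Suc.IH closed[OF Suc.prems]
      by (intro integral_mono_AE) (auto simp: integrable_measure_pmf_finite AE_measure_pmf_iff)
    also have "\<dots> \<le> \<phi> u"
      using potential[OF Suc.prems False] .
    finally show ?thesis
      unfolding first_step integral_trunc_payoff_Cons[OF False] .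
  qed (unfold first_step, simp)
qed

lemma summable_if_eventually_contracting:
  fixes p :: "nat \<Rightarrow> real"
  assumes nonneg: "\<And>N. 0 \<le> p N" and le_1: "\<And>N. p N \<le> 1"
    and contract: "\<And>N. p (m + N) \<le> q * p N" and "0 \<le> q" "q < 1"
  shows "summable p"
proof (rule summableI_nonneg_bounded[OF nonneg])
  define S where "S L = (\<Sum>N<L. p N)" for L
  have S_mono: "S L \<le> S (m + L)" for L
    unfolding S_def using nonneg by (intro sum_mono2) auto
  have "S (m + L) = S m + (\<Sum>N<L. p (m + N))" for L
    unfolding S_def by (induction L) simp_all
  moreover have "S m \<le> real m"
    using sum_bounded_above[of "{..<m}" p 1] le_1 by (simp add: S_def)
  moreover have "(\<Sum>N<L. p (m + N)) \<le> q * S L" for L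
    unfolding S_def sum_distrib_left by (intro sum_mono contract)
  ultimately have bound: "S (m + L) \<le> real m + q * S (m + L)" for L
    using mult_left_mono[OF S_mono[of L] \<open>0 \<le> q\<close>] by (smt (verit))
  have "S (m + L) \<le> real m / (1 - q)" for L
    using bound[of L] \<open>q < 1\<close> by (simp add: pos_le_divide_eq algebra_simps)
  then show "S L \<le> real m / (1 - q)" for L
    using S_mono[of L] by (meson order.trans)
qed

lemma AE_reaches:
  assumes closed: "\<And>u. u \<in> A \<Longrightarrow> set_pmf (K u) \<subseteq> A"
    and bound: "\<And>u. u \<in> A \<Longrightarrow> avoid_prob K T m u \<le> q" and "q < 1" and "v \<in> A"
  shows "AE s in mc_paths K v. \<exists>n. s !! n \<in> T"
proof -
  interpret prob_space "mc_paths K v" by (rule prob_space_mc_paths)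
  let ?never = "{s \<in> space (mc_paths K v). \<forall>n. s !! n \<notin> T}"
  have "0 \<le> q" using bound[OF \<open>v \<in> A\<close>] measure_nonneg order.trans by blast
  have "prob ?never \<le> q ^ j" for j
  proof -
    have "prob ?never \<le> avoid_prob K T (j * m) v"
      using sets_avoids[of T "j * m"] by (intro finite_measure_mono) (auto simp: avoids_def)
    also have "\<dots> \<le> q ^ j"
      by (rule avoid_prob_mult_le[OF closed bound \<open>0 \<le> q\<close> \<open>v \<in> A\<close>])
    finally show ?thesis .
  qed
  then have "prob ?never \<le> 0"
    by (intro LIMSEQ_le_const[OF LIMSEQ_power_zero[of q]]) (use \<open>0 \<le> q\<close> \<open>q < 1\<close> in auto)
  then have "emeasure (mc_paths K v) ?never = 0"
    by (simp add: emeasure_eq_measure antisym)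
  then show ?thesis
    by (intro AE_I'[of ?never]) auto
qed

definition hit_time :: "'v set \<Rightarrow> 'v stream \<Rightarrow> nat" where
  "hit_time T s = (if \<exists>n. s !! n \<in> T then LEAST n. s !! n \<in> T else 0)"

lemma measurable_hit_time [measurable]:
  "hit_time T \<in> measurable (path_space :: 'v::countable stream measure) (count_space UNIV)"
  unfolding hit_time_def by measurable

lemma hit_time_le_suminf_avoids:
  "ennreal (real (hit_time T s)) \<le> (\<Sum>N. indicator (avoids T (Suc N)) s)"
proof -
  have "s \<in> avoids T (Suc N)" if "N < hit_time T s" for N
    using that not_less_Least[of _ "\<lambda>n. s !! n \<in> T"]
    by (auto simp: avoids_def hit_time_def split: if_splits)
  then have "(\<Sum>N<hit_time T s. indicator (avoids T (Suc N)) s :: ennreal) = (\<Sum>N<hit_time T s. 1)"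
    by (intro sum.cong) auto
  then have "ennreal (real (hit_time T s)) = (\<Sum>N<hit_time T s. indicator (avoids T (Suc N)) s)"
    by (simp add: ennreal_of_nat_eq_real_of_nat)
  also have "\<dots> \<le> (\<Sum>N. indicator (avoids T (Suc N)) s)"
    by (rule sum_le_suminf) simp_all
  finally show ?thesis .
qed

lemma integrable_hit_time:
  assumes closed: "\<And>u. u \<in> A \<Longrightarrow> set_pmf (K u) \<subseteq> A"
    and bound: "\<And>u. u \<in> A \<Longrightarrow> avoid_prob K T m u \<le> q" and "q < 1" and "v \<in> A"
  shows "integrable (mc_paths K v) (\<lambda>s. real (hit_time T s))"
proof -
  interpret prob_space "mc_paths K v" by (rule prob_space_mc_paths)
  have "0 \<le> q" using bound[OF \<open>v \<in> A\<close>] measure_nonneg order.trans by blast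
  have "avoid_prob K T (m + N) v \<le> q * avoid_prob K T N v" for N
    using avoid_prob_add_le[OF closed bound \<open>v \<in> A\<close>, of N] by (simp only: mult.commute)
  then have "summable (\<lambda>N. avoid_prob K T N v)"
    using avoid_prob_le_1 \<open>0 \<le> q\<close> \<open>q < 1\<close> by (intro summable_if_eventually_contracting) simp_all
  then have summable: "summable (\<lambda>N. avoid_prob K T (Suc N) v)"
    by (subst summable_Suc_iff)
  have "(\<integral>\<^sup>+s. ennreal (norm (real (hit_time T s))) \<partial>mc_paths K v)
      \<le> (\<integral>\<^sup>+s. (\<Sum>N. indicator (avoids T (Suc N)) s) \<partial>mc_paths K v)"
    by (intro nn_integral_mono) (simp add: hit_time_le_suminf_avoids)
  also have "\<dots> = (\<Sum>N. emeasure (mc_paths K v) (avoids T (Suc N)))"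
    by (subst nn_integral_suminf) simp_all
  also have "\<dots> = ennreal (\<Sum>N. avoid_prob K T (Suc N) v)"
    unfolding emeasure_eq_measure by (rule suminf_ennreal2[OF _ summable]) simp
  also have "\<dots> < \<infinity>"
    by simp
  finally show ?thesis
    by (intro integrableI_bounded) simp_all
qed

lemma trunc_payoff_reaching:
  assumes "s !! n \<in> T"
  obtains k where "k \<le> hit_time T s"
    "trunc_payoff T w \<phi> N s = (\<Sum>i<k. real_of_int (w (s !! i, s !! Suc i))) + \<phi> (s !! k)"
    "hit_time T s \<le> N \<Longrightarrow> k = hit_time T s"
proof -
  have reach: "\<exists>n. s !! n \<in> T" using assms by blast
  define H where "H = hit_time T s"
  have "s !! H \<in> T" and "\<And>i. i < H \<Longrightarrow> s !! i \<notin> T"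
    using LeastI_ex[OF reach] not_less_Least by (auto simp: H_def hit_time_def reach)
  then show ?thesis
    by (intro that[of "min N H"] trunc_payoff_eq) (auto simp: H_def min_def)
qed

lemma abs_trunc_payoff_le_hit_time:
  fixes w :: "'v::finite \<times> 'v \<Rightarrow> int"
  assumes "s !! n \<in> T"
  shows "\<bar>trunc_payoff T w \<phi> N s\<bar>
    \<le> (\<Sum>e\<in>UNIV. \<bar>real_of_int (w e)\<bar>) * real (hit_time T s) + (\<Sum>u\<in>UNIV. \<bar>\<phi> u\<bar>)"
proof -
  obtain k where k: "k \<le> hit_time T s"
    "trunc_payoff T w \<phi> N s = (\<Sum>i<k. real_of_int (w (s !! i, s !! Suc i))) + \<phi> (s !! k)"
    using trunc_payoff_reaching[OF assms] by metis
  have "\<bar>\<Sum>i<k. real_of_int (w (s !! i, s !! Suc i))\<bar> \<le> (\<Sum>i<k. \<Sum>e\<in>UNIV. \<bar>real_of_int (w e)\<bar>)"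
    by (rule order.trans[OF sum_abs sum_mono], rule member_le_sum) simp_all
  also have "\<dots> \<le> (\<Sum>e\<in>UNIV. \<bar>real_of_int (w e)\<bar>) * real (hit_time T s)"
    using k(1) sum_nonneg[of UNIV "\<lambda>e. \<bar>real_of_int (w e)\<bar>"]
    by (simp add: mult.commute mult_right_mono)
  finally show ?thesis
    using member_le_sum[of "s !! k" UNIV "\<lambda>u. \<bar>\<phi> u\<bar>"] by (simp add: k(2))
qed

lemma trunc_payoff_eq_TP:
  assumes "s !! n \<in> T" "hit_time T s \<le> N" and zero_on_T: "\<And>t. t \<in> T \<Longrightarrow> \<phi> t = 0"
  shows "trunc_payoff T w \<phi> N s = real_of_ereal (TP T w (snth s))"
proof -
  have reach: "\<exists>n. s !! n \<in> T" using assms(1) by blast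
  then have H: "hit_time T s = (LEAST n. s !! n \<in> T)" and "s !! hit_time T s \<in> T"
    using LeastI_ex[OF reach] by (simp_all add: hit_time_def)
  obtain k where "k = hit_time T s"
    and "trunc_payoff T w \<phi> N s = (\<Sum>i<k. real_of_int (w (s !! i, s !! Suc i))) + \<phi> (s !! k)"
    using trunc_payoff_reaching[OF assms(1), where N = N and w = w and \<phi> = \<phi>] assms(2) by blast
  with \<open>s !! hit_time T s \<in> T\<close> show ?thesis
    unfolding TP_def using reach H zero_on_T by simp
qed

lemma real_integral_eq_pos_minus_neg:
  fixes f :: "'a \<Rightarrow> real"
  assumes "integrable M f"
  shows "enn2ereal (\<integral>\<^sup>+x. ennreal (f x) \<partial>M) - enn2ereal (\<integral>\<^sup>+x. ennreal (- f x) \<partial>M)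
    = ereal (\<integral>x. f x \<partial>M)"
  using assms real_lebesgue_integral_def[OF assms]
  by (cases "\<integral>\<^sup>+x. ennreal (f x) \<partial>M"; cases "\<integral>\<^sup>+x. ennreal (- f x) \<partial>M")
    (auto simp: real_integrable_def)

lemma exp_TP_eq_integral:
  assumes "AE s in mc_paths K v. \<exists>n. s !! n \<in> T"
    and "integrable (mc_paths K v) (\<lambda>s. real_of_ereal (TP T w (snth s)))"
  shows "exp_TP T w (mc_paths K v) = ereal (\<integral>s. real_of_ereal (TP T w (snth s)) \<partial>mc_paths K v)"
proof -
  have "emeasure (mc_paths K v) {s \<in> space (mc_paths K v). \<forall>n. s !! n \<notin> T} = 0"
    using assms(1) by (subst AE_iff_measurable[symmetric]) auto
  then show ?thesis
    unfolding exp_TP_def using real_integral_eq_pos_minus_neg[OF assms(2)] by simp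
qed

text \<open>The truncated payoffs converge to TP almost surely, dominated by a function linear in the
  hitting time, which is integrable because the target is hit geometrically fast.\<close>

theorem exp_TP_le_potential:
  fixes K :: "'v::finite \<Rightarrow> 'v pmf" and \<phi> :: "'v \<Rightarrow> real"
  assumes closed: "\<And>u. u \<in> A \<Longrightarrow> set_pmf (K u) \<subseteq> A"
    and zero_on_T: "\<And>t. t \<in> T \<Longrightarrow> \<phi> t = 0"
    and potential: "\<And>u. u \<in> A \<Longrightarrow> u \<notin> T \<Longrightarrow>
      (\<integral>u'. real_of_int (w (u, u')) + \<phi> u' \<partial>measure_pmf (K u)) \<le> \<phi> u"
    and bound: "\<And>u. u \<in> A \<Longrightarrow> avoid_prob K T m u \<le> q" and "q < 1" and "v \<in> A"
  shows "exp_TP T w (mc_paths K v) \<le> ereal (\<phi> v)"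
proof -
  interpret prob_space "mc_paths K v" by (rule prob_space_mc_paths)
  let ?TP = "\<lambda>s. real_of_ereal (TP T w (snth s))"
  let ?bound = "\<lambda>s. (\<Sum>e\<in>UNIV. \<bar>real_of_int (w e)\<bar>) * real (hit_time T s) + (\<Sum>u\<in>UNIV. \<bar>\<phi> u\<bar>)"
  have reaches: "AE s in mc_paths K v. \<exists>n. s !! n \<in> T"
    by (rule AE_reaches[OF closed bound \<open>q < 1\<close> \<open>v \<in> A\<close>])
  have dominant: "integrable (mc_paths K v) ?bound"
    using integrable_hit_time[OF closed bound \<open>q < 1\<close> \<open>v \<in> A\<close>] by simp
  have converges: "AE s in mc_paths K v. (\<lambda>N. trunc_payoff T w \<phi> N s) \<longlonglongrightarrow> ?TP s"
    using reaches
  proof eventually_elim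
    case (elim s)
    then show ?case
      by (intro tendsto_eventually eventually_sequentiallyI[of "hit_time T s"])
        (auto intro: trunc_payoff_eq_TP zero_on_T)
  qed
  have dominated: "AE s in mc_paths K v. norm (trunc_payoff T w \<phi> N s) \<le> ?bound s" for N
    using reaches by eventually_elim (auto intro: abs_trunc_payoff_le_hit_time)
  have measurable: "?TP \<in> borel_measurable (mc_paths K v)"
    "\<And>N. trunc_payoff T w \<phi> N \<in> borel_measurable (mc_paths K v)"
    by measurable
  note dominated_convergence =
    integrable_dominated_convergence[OF measurable dominant converges dominated]
    integral_dominated_convergence[OF measurable dominant converges dominated]
  have "(\<integral>s. trunc_payoff T w \<phi> N s \<partial>mc_paths K v) \<le> \<phi> v" for N
    by (rule integral_trunc_payoff_le[OF closed potential \<open>v \<in> A\<close>])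
  then have "(\<integral>s. ?TP s \<partial>mc_paths K v) \<le> \<phi> v"
    by (intro LIMSEQ_le_const2[OF dominated_convergence(2)]) auto
  then show ?thesis
    unfolding exp_TP_eq_integral[OF reaches dominated_convergence(1)] by simp
qed

lemma ereal_le_pos_minus_neg_nn_integral:
  fixes f :: "'a \<Rightarrow> real"
  assumes "prob_space M" and f [measurable]: "f \<in> borel_measurable M" and lower: "AE x in M. r \<le> f x"
  shows "ereal r \<le> enn2ereal (\<integral>\<^sup>+x. ennreal (f x) \<partial>M) - enn2ereal (\<integral>\<^sup>+x. ennreal (- f x) \<partial>M)"
proof -
  interpret prob_space M by fact
  let ?pos = "\<integral>\<^sup>+x. ennreal (f x) \<partial>M" and ?neg = "\<integral>\<^sup>+x. ennreal (- f x) \<partial>M"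
  have "?neg \<le> (\<integral>\<^sup>+x. ennreal (- r) \<partial>M)"
    using lower by (intro nn_integral_mono_AE) (auto elim!: eventually_mono intro!: ennreal_leI)
  then obtain b where b: "?neg = ennreal b" "0 \<le> b"
    by (cases ?neg) (auto simp: emeasure_space_1 top_unique)
  have "ennreal (- y) + ennreal r \<le> ennreal y + ennreal (- r)" if "r \<le> y" for y
    using that by (cases "0 \<le> r"; cases "0 \<le> y") (auto simp: ennreal_neg intro: ennreal_leI)
  then have "(\<integral>\<^sup>+x. ennreal (- f x) + ennreal r \<partial>M) \<le> (\<integral>\<^sup>+x. ennreal (f x) + ennreal (- r) \<partial>M)"
    using lower by (intro nn_integral_mono_AE) (auto elim!: eventually_mono)
  then have le: "?neg + ennreal r \<le> ?pos + ennreal (- r)"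
    by (simp add: nn_integral_add emeasure_space_1)
  show ?thesis
  proof (cases ?pos)
    case (real a)
    with b le have "r \<le> a - b"
      by (cases "0 \<le> r") (auto simp: ennreal_neg ennreal_plus[symmetric] simp del: ennreal_plus)
    then show ?thesis using real b by simp
  qed (use b in simp)
qed

theorem exp_TP_ge_AE:
  assumes "AE s in mc_paths K v. x \<le> TP T w (snth s)"
  shows "x \<le> exp_TP T w (mc_paths K v)"
proof (cases "AE s in mc_paths K v. \<exists>n. s !! n \<in> T")
  case reaches: True
  then have never: "emeasure (mc_paths K v) {s \<in> space (mc_paths K v). \<forall>n. s !! n \<notin> T} = 0"
    by (subst AE_iff_measurable[symmetric]) auto
  show ?thesis
  proof (cases x)
    case (real r)
    have "AE s in mc_paths K v. r \<le> real_of_ereal (TP T w (snth s))"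
      using reaches assms by eventually_elim (auto simp: TP_def real)
    then show ?thesis
      unfolding exp_TP_def real using never
      by (simp add: ereal_le_pos_minus_neg_nn_integral[OF prob_space_mc_paths])
  next
    case PInf
    have "AE s in mc_paths K v. False"
      using reaches assms by eventually_elim (auto simp: TP_def PInf)
    then show ?thesis
      using prob_space.AE_False[OF prob_space_mc_paths] by blast
  qed simp
next
  case False
  then have "emeasure (mc_paths K v) {s \<in> space (mc_paths K v). \<forall>n. s !! n \<notin> T} \<noteq> 0"
    by (subst (asm) AE_iff_measurable[OF _ refl]) auto
  then show ?thesis
    by (simp add: exp_TP_def)
qed

section \<open>Value iteration\<close>

lemma INF_ereal_add_const: "(INF i. ereal c + f i) = ereal c + (INF i. f i :: ereal)"
proof -
  have ge: "ereal d + (INF i. g i) \<le> (INF i. ereal d + g i)" for d and g :: "'a \<Rightarrow> ereal"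
    by (intro INF_greatest add_left_mono INF_lower) simp
  have cancel: "ereal d + (ereal (- d) + x) = x" for d x
    by (cases x) auto
  have "ereal (- c) + (INF i. ereal c + f i) \<le> (INF i. ereal (- c) + (ereal c + f i))"
    by (rule ge)
  also have "\<dots> = (INF i. f i)"
    using cancel[of "- c"] by simp
  finally have "ereal c + (ereal (- c) + (INF i. ereal c + f i)) \<le> ereal c + (INF i. f i)"
    by (rule add_left_mono)
  then show ?thesis
    using ge[of c f] by (simp add: cancel antisym)
qed

locale shortest_path_game =
  fixes VMax VMin T :: "'v::finite set" and E :: "('v \<times> 'v) set" and w :: "'v \<times> 'v \<Rightarrow> int"
  assumes spg: "spg VMax VMin T E"
begin

definition succ :: "'v \<Rightarrow> 'v set" where
  "succ u = {u'. (u, u') \<in> E}"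

abbreviation wt :: "'v \<Rightarrow> 'v \<Rightarrow> ereal" where
  "wt u u' \<equiv> ereal (real_of_int (w (u, u')))"

lemma succ_nonempty: "u \<notin> T \<Longrightarrow> succ u \<noteq> {}"
  using spg by (auto simp: spg_def succ_def)

lemma Max_vertex: "u \<notin> T \<Longrightarrow> u \<notin> VMin \<Longrightarrow> u \<in> VMax"
  using spg by (auto simp: spg_def)

lemma Min_vertex_not_target: "u \<in> VMin \<Longrightarrow> u \<notin> T"
  using spg by (auto simp: spg_def)

lemma Max_vertex_not_Min: "u \<in> VMax \<Longrightarrow> u \<notin> T \<and> u \<notin> VMin"
  using spg by (auto simp: spg_def)

text \<open>horizon_val k u is the value from u of the game in which Min must reach T within k steps,
  the payoff being \<infinity> otherwise.\<close>

fun horizon_val :: "nat \<Rightarrow> 'v \<Rightarrow> ereal" where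
  "horizon_val 0 u = (if u \<in> T then 0 else \<infinity>)"
| "horizon_val (Suc k) u = (if u \<in> T then 0
     else if u \<in> VMin then Min ((\<lambda>u'. wt u u' + horizon_val k u') ` succ u)
     else Max ((\<lambda>u'. wt u u' + horizon_val k u') ` succ u))"

lemma horizon_val_T: "u \<in> T \<Longrightarrow> horizon_val k u = 0"
  by (cases k) auto

lemma horizon_val_Min_le:
  "u \<in> VMin \<Longrightarrow> u' \<in> succ u \<Longrightarrow> horizon_val (Suc k) u \<le> wt u u' + horizon_val k u'"
  using Min_vertex_not_target by (auto simp: succ_def)

lemma horizon_val_Min_attained:
  assumes "u \<in> VMin"
  obtains u' where "u' \<in> succ u" "horizon_val (Suc k) u = wt u u' + horizon_val k u'"
proof -
  have "u \<notin> T" using assms by (rule Min_vertex_not_target)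
  then have "Min ((\<lambda>u'. wt u u' + horizon_val k u') ` succ u) \<in> (\<lambda>u'. wt u u' + horizon_val k u') ` succ u"
    using succ_nonempty by (intro Min_in) auto
  then show ?thesis using assms \<open>u \<notin> T\<close> that by auto
qed

lemma horizon_val_Max_ge:
  "u \<notin> T \<Longrightarrow> u \<notin> VMin \<Longrightarrow> u' \<in> succ u \<Longrightarrow> wt u u' + horizon_val k u' \<le> horizon_val (Suc k) u"
  by auto

lemma horizon_val_Max_attained:
  assumes "u \<notin> T" "u \<notin> VMin"
  obtains u' where "u' \<in> succ u" "horizon_val (Suc k) u = wt u u' + horizon_val k u'"
proof -
  have "Max ((\<lambda>u'. wt u u' + horizon_val k u') ` succ u) \<in> (\<lambda>u'. wt u u' + horizon_val k u') ` succ u"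
    using succ_nonempty assms by (intro Max_in) auto
  then show ?thesis using assms that by auto
qed

lemma horizon_val_attained:
  assumes "u \<notin> T"
  obtains u' where "u' \<in> succ u" "horizon_val (Suc k) u = wt u u' + horizon_val k u'"
  using horizon_val_Min_attained horizon_val_Max_attained assms by metis

lemma horizon_val_int_or_infinity: "horizon_val k u = \<infinity> \<or> (\<exists>z::int. horizon_val k u = ereal (real_of_int z))"
proof (induction k arbitrary: u)
  case (Suc k)
  show ?case
  proof (cases "u \<in> T")
    case False
    then obtain u' where "horizon_val (Suc k) u = wt u u' + horizon_val k u'"
      by (rule horizon_val_attained)
    then show ?thesis
      using Suc[of u'] by (auto intro: exI[of _ "w (u, u') + z" for z])
  qed (auto intro: exI[of _ 0])
qed (auto intro: exI[of _ 0])

lemma horizon_val_Suc_le: "horizon_val (Suc k) u \<le> horizon_val k u"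
proof (induction k arbitrary: u)
  case (Suc k)
  show ?case
  proof (cases "u \<in> T")
    case nT: False
    show ?thesis
    proof (cases "u \<in> VMin")
      case True
      obtain u' where "u' \<in> succ u" "horizon_val (Suc k) u = wt u u' + horizon_val k u'"
        using horizon_val_Min_attained[OF True] .
      then show ?thesis
        using horizon_val_Min_le[OF True, of u' "Suc k"] Suc[of u'] by (metis add_left_mono order.trans)
    next
      case False
      obtain u' where "u' \<in> succ u" "horizon_val (Suc (Suc k)) u = wt u u' + horizon_val (Suc k) u'"
        using horizon_val_Max_attained[OF nT False] .
      then show ?thesis
        using horizon_val_Max_ge[OF nT False, of u' k] Suc[of u'] by (metis add_left_mono order.trans)
    qed
  qed (simp add: horizon_val_T)
qed simp

lemma horizon_val_antimono: "j \<le> k \<Longrightarrow> horizon_val k u \<le> horizon_val j u"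
  by (induction k rule: dec_induct) (use horizon_val_Suc_le order.trans in blast)+

definition lim_val :: "'v \<Rightarrow> ereal" where
  "lim_val u = (INF k. horizon_val k u)"

lemma lim_val_le: "lim_val u \<le> horizon_val k u"
  unfolding lim_val_def by (rule INF_lower) simp

lemma lim_val_T: "u \<in> T \<Longrightarrow> lim_val u = 0"
  by (simp add: lim_val_def horizon_val_T)

lemma lim_val_Min_le:
  assumes "u \<in> VMin" "u' \<in> succ u"
  shows "lim_val u \<le> wt u u' + lim_val u'"
proof -
  have "lim_val u \<le> (INF k. wt u u' + horizon_val k u')"
    using order.trans[OF lim_val_le horizon_val_Min_le[OF assms]] by (rule INF_greatest)
  then show ?thesis
    by (simp add: INF_ereal_add_const lim_val_def)
qed

lemma lim_val_Max_attained:
  assumes "u \<notin> T" "u \<notin> VMin"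
  shows "\<exists>u' \<in> succ u. lim_val u \<le> wt u u' + lim_val u'"
proof (rule ccontr)
  assume "\<not> ?thesis"
  then have "\<exists>k. wt u u' + horizon_val k u' < lim_val u" if "u' \<in> succ u" for u'
    using that by (auto simp: not_le INF_less_iff lim_val_def[of u'] INF_ereal_add_const[symmetric])
  then obtain kf where kf: "\<And>u'. u' \<in> succ u \<Longrightarrow> wt u u' + horizon_val (kf u') u' < lim_val u"
    by metis
  define k where "k = Max (kf ` succ u)"
  obtain u' where u': "u' \<in> succ u" "horizon_val (Suc k) u = wt u u' + horizon_val k u'"
    using horizon_val_Max_attained[OF assms] .
  have "horizon_val k u' \<le> horizon_val (kf u') u'"
    using u'(1) by (intro horizon_val_antimono) (simp add: k_def)
  then have "horizon_val (Suc k) u < lim_val u"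
    using kf[OF u'(1)] u'(2) by (metis add_left_mono le_less_trans)
  then show False
    using lim_val_le[of u "Suc k"] by simp
qed

definition Max_choice :: "'v \<Rightarrow> 'v" where
  "Max_choice u = (SOME u'. u' \<in> succ u \<and> lim_val u \<le> wt u u' + lim_val u')"

lemma Max_choice:
  assumes "u \<notin> T" "u \<notin> VMin"
  shows "Max_choice u \<in> succ u" "lim_val u \<le> wt u (Max_choice u) + lim_val (Max_choice u)"
  using someI_ex[OF lim_val_Max_attained[OF assms, unfolded Bex_def]]
  by (simp_all add: Max_choice_def)

lemma Max_choice_succ: "u \<in> VMax \<Longrightarrow> Max_choice u \<in> succ u"
  using Max_choice(1) Max_vertex_not_Min by blast

end

section \<open>Lower bounds and the deterministic upper bound\<close>

lemma TP_ge_telescoping: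
  fixes f :: "'v \<Rightarrow> ereal"
  assumes zero_on_T: "\<And>t. t \<in> T \<Longrightarrow> f t = 0"
    and step: "\<And>i. x i \<notin> T \<Longrightarrow> f (x i) \<le> ereal (real_of_int (w (x i, x (Suc i)))) + f (x (Suc i))"
  shows "f (x 0) \<le> TP T w x"
proof (cases "\<exists>n. x n \<in> T")
  case True
  define H where "H = (LEAST n. x n \<in> T)"
  have partial: "m \<le> H \<Longrightarrow> f (x 0) \<le> ereal (\<Sum>i<m. real_of_int (w (x i, x (Suc i)))) + f (x m)" for m
  proof (induction m)
    case (Suc m)
    have "x m \<notin> T"
      using Suc.prems not_less_Least[of m "\<lambda>n. x n \<in> T"] by (simp add: H_def)
    then have "f (x 0) \<le> ereal (\<Sum>i<m. real_of_int (w (x i, x (Suc i))))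
        + (ereal (real_of_int (w (x m, x (Suc m)))) + f (x (Suc m)))"
      using Suc by (auto intro: order.trans add_left_mono step)
    then show ?case
      by (cases "f (x (Suc m))") (simp_all add: add.assoc)
  qed simp
  have "x H \<in> T"
    unfolding H_def using True by (rule LeastI_ex)
  then show ?thesis
    using partial[of H] True zero_on_T by (simp add: TP_def H_def)
qed (simp add: TP_def)

lemma out_0: "out VMin T v \<sigma> \<tau> 0 = v"
  by (simp add: out_def)

lemma length_det_hist: "length (det_hist VMin T \<sigma> \<tau> v i) = Suc i"
  by (induction i) auto

lemma out_Suc:
  "out VMin T v \<sigma> \<tau> (Suc i) = (let h = det_hist VMin T \<sigma> \<tau> v i; u = out VMin T v \<sigma> \<tau> i in
     if u \<in> T then u else if u \<in> VMin then \<sigma> h else \<tau> h)"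
  by (simp add: out_def det_step_def)

context shortest_path_game
begin

lemma out_Suc_succ:
  assumes "det_strategy VMin E \<sigma>" "det_strategy VMax E \<tau>" "out VMin T v \<sigma> \<tau> i \<notin> T"
  shows "out VMin T v \<sigma> \<tau> (Suc i) \<in> succ (out VMin T v \<sigma> \<tau> i)"
proof -
  have "det_hist VMin T \<sigma> \<tau> v i \<noteq> []" and "last (det_hist VMin T \<sigma> \<tau> v i) = out VMin T v \<sigma> \<tau> i"
    by (cases i) (simp_all add: out_def)
  then show ?thesis
    using assms Max_vertex[OF assms(3)] by (auto simp: out_Suc det_strategy_def succ_def Let_def)
qed

lemma lim_val_le_step:
  assumes "u \<notin> T" and move: "if u \<in> VMin then u' \<in> succ u else u' = Max_choice u"
  shows "lim_val u \<le> wt u u' + lim_val u'"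
  using move lim_val_Min_le Max_choice(2)[OF \<open>u \<notin> T\<close>] by (auto split: if_splits)

lemma set_pmf_kernel_Min:
  "mless_strategy VMin E \<rho> \<Longrightarrow> u \<in> VMin \<Longrightarrow> set_pmf (mc_kernel VMin T \<rho> \<tau> u) \<subseteq> succ u"
  using Min_vertex_not_target by (auto simp: mc_kernel_def mless_strategy_def succ_def)

lemma set_pmf_kernel_Max:
  "mless_strategy VMax E \<tau> \<Longrightarrow> u \<notin> T \<Longrightarrow> u \<notin> VMin \<Longrightarrow> set_pmf (mc_kernel VMin T \<rho> \<tau> u) \<subseteq> succ u"
  using Max_vertex by (auto simp: mc_kernel_def mless_strategy_def succ_def)

theorem lim_val_le_Val_d: "lim_val v \<le> Val_d VMax VMin T E w v"
  unfolding Val_d_def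
proof (rule INF_greatest)
  fix \<sigma> assume "\<sigma> \<in> {\<sigma>. det_strategy VMin E \<sigma>}"
  then have \<sigma>: "det_strategy VMin E \<sigma>" by simp
  define \<tau> where "\<tau> h = Max_choice (last h)" for h :: "'v list"
  have \<tau>: "det_strategy VMax E \<tau>"
    using Max_choice_succ by (auto simp: det_strategy_def \<tau>_def succ_def)
  let ?x = "out VMin T v \<sigma> \<tau>"
  have "lim_val (?x 0) \<le> TP T w ?x"
  proof (rule TP_ge_telescoping[OF lim_val_T])
    fix i assume nT: "?x i \<notin> T"
    have "last (det_hist VMin T \<sigma> \<tau> v i) = ?x i"
      by (simp add: out_def)
    then show "lim_val (?x i) \<le> wt (?x i) (?x (Suc i)) + lim_val (?x (Suc i))"
      using out_Suc_succ[OF \<sigma> \<tau> nT] nT by (intro lim_val_le_step) (auto simp: out_Suc \<tau>_def Let_def)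
  qed
  also have "\<dots> \<le> Val_sigma VMax VMin T E w \<sigma> v"
    unfolding Val_sigma_def using \<tau> by (intro SUP_upper) simp
  finally show "lim_val v \<le> Val_sigma VMax VMin T E w \<sigma> v"
    by (simp add: out_0)
qed

theorem lim_val_le_Val_m_rho:
  assumes \<rho>: "mless_strategy VMin E \<rho>"
  shows "lim_val v \<le> Val_m_rho VMax VMin T E w \<rho> v"
proof -
  define \<tau> where "\<tau> u = return_pmf (Max_choice u)" for u
  have \<tau>: "mless_strategy VMax E \<tau>"
    using Max_choice_succ by (auto simp: mless_strategy_def \<tau>_def succ_def)
  let ?K = "mc_kernel VMin T \<rho> \<tau>"
  have "AE s in mc_paths ?K v. lim_val v \<le> TP T w (snth s)"
    using AE_kernel_path[of ?K v]
  proof eventually_elim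
    case (elim s)
    have "lim_val (s !! 0) \<le> TP T w (snth s)"
    proof (rule TP_ge_telescoping[OF lim_val_T])
      fix i assume nT: "s !! i \<notin> T"
      have next_vertex: "s !! Suc i \<in> set_pmf (?K (s !! i))"
        using elim by (simp add: kernel_path_def)
      then have "s !! Suc i \<in> succ (s !! i)" if "s !! i \<in> VMin"
        using set_pmf_kernel_Min[OF \<rho> that] by blast
      with next_vertex show "lim_val (s !! i) \<le> wt (s !! i) (s !! Suc i) + lim_val (s !! Suc i)"
        using nT by (intro lim_val_le_step) (auto simp: mc_kernel_def \<tau>_def)
    qed
    then show ?case
      using elim by (simp add: kernel_path_def)
  qed
  then have "lim_val v \<le> exp_TP T w (mc_paths ?K v)"
    by (rule exp_TP_ge_AE)
  also have "\<dots> \<le> Val_m_rho VMax VMin T E w \<rho> v"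
    unfolding Val_m_rho_def using \<tau> by (intro SUP_upper) simp
  finally show ?thesis .
qed

lemma horizon_val_telescoping:
  assumes step: "\<And>i. i < k \<Longrightarrow> x i \<notin> T \<Longrightarrow>
      wt (x i) (x (Suc i)) + horizon_val (k - Suc i) (x (Suc i)) \<le> horizon_val (k - i) (x i)"
  shows "m \<le> k \<Longrightarrow> \<forall>i<m. x i \<notin> T \<Longrightarrow>
    ereal (\<Sum>i<m. real_of_int (w (x i, x (Suc i)))) + horizon_val (k - m) (x m) \<le> horizon_val k (x 0)"
proof (induction m)
  case (Suc m)
  have "ereal (\<Sum>i<Suc m. real_of_int (w (x i, x (Suc i)))) + horizon_val (k - Suc m) (x (Suc m))
      = ereal (\<Sum>i<m. real_of_int (w (x i, x (Suc i))))
        + (wt (x m) (x (Suc m)) + horizon_val (k - Suc m) (x (Suc m)))"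
    by (cases "horizon_val (k - Suc m) (x (Suc m))") simp_all
  also have "\<dots> \<le> ereal (\<Sum>i<m. real_of_int (w (x i, x (Suc i)))) + horizon_val (k - m) (x m)"
    using Suc.prems by (intro add_left_mono step) auto
  finally show ?case
    using Suc by simp
qed simp

lemma TP_le_horizon_val:
  assumes finite: "horizon_val k (x 0) < \<infinity>"
    and step: "\<And>i. i < k \<Longrightarrow> x i \<notin> T \<Longrightarrow>
      wt (x i) (x (Suc i)) + horizon_val (k - Suc i) (x (Suc i)) \<le> horizon_val (k - i) (x i)"
  shows "TP T w x \<le> horizon_val k (x 0)"
proof -
  have telescoping: "ereal (\<Sum>i<m. real_of_int (w (x i, x (Suc i)))) + horizon_val (k - m) (x m) \<le> horizon_val k (x 0)"
    if "m \<le> k" "\<forall>i<m. x i \<notin> T" for m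
    by (rule horizon_val_telescoping[OF _ that]) (fact step)
  have "\<exists>n \<le> k. x n \<in> T"
  proof (rule ccontr)
    assume "\<not> (\<exists>n \<le> k. x n \<in> T)"
    then have "\<forall>i<k. x i \<notin> T" "x k \<notin> T"
      by auto
    then show False
      using telescoping[of k] finite by simp
  qed
  then obtain n where "n \<le> k" "x n \<in> T"
    by blast
  define H where "H = (LEAST n. x n \<in> T)"
  have "x H \<in> T"
    unfolding H_def using \<open>x n \<in> T\<close> by (rule LeastI)
  have "H \<le> k"
    unfolding H_def using \<open>n \<le> k\<close> \<open>x n \<in> T\<close> by (meson Least_le order.trans)
  have "\<forall>i<H. x i \<notin> T"
    unfolding H_def using not_less_Least by blast
  have "TP T w x = ereal (\<Sum>i<H. real_of_int (w (x i, x (Suc i))))"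
    unfolding TP_def H_def using \<open>x n \<in> T\<close> by auto
  then show ?thesis
    using telescoping[OF \<open>H \<le> k\<close> \<open>\<forall>i<H. x i \<notin> T\<close>] horizon_val_T[OF \<open>x H \<in> T\<close>] by simp
qed

definition Min_choice :: "nat \<Rightarrow> 'v \<Rightarrow> 'v" where
  "Min_choice j u = (SOME u'. u' \<in> succ u \<and> horizon_val (Suc j) u = wt u u' + horizon_val j u')"

lemma Min_choice:
  assumes "u \<in> VMin"
  shows "Min_choice j u \<in> succ u" "horizon_val (Suc j) u = wt u (Min_choice j u) + horizon_val j (Min_choice j u)"
proof -
  have "\<exists>u'. u' \<in> succ u \<and> horizon_val (Suc j) u = wt u u' + horizon_val j u'"
    using horizon_val_Min_attained[OF assms] by blast
  then have "Min_choice j u \<in> succ u \<and> horizon_val (Suc j) u = wt u (Min_choice j u) + horizon_val j (Min_choice j u)"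
    unfolding Min_choice_def by (rule someI_ex)
  then show "Min_choice j u \<in> succ u" "horizon_val (Suc j) u = wt u (Min_choice j u) + horizon_val j (Min_choice j u)"
    by blast+
qed

definition some_succ :: "'v \<Rightarrow> 'v" where
  "some_succ u = (SOME u'. u' \<in> succ u)"

lemma some_succ: "u \<notin> T \<Longrightarrow> some_succ u \<in> succ u"
  unfolding some_succ_def using succ_nonempty by (simp add: some_in_eq)

text \<open>The length of the history tells how many of the k steps remain.\<close>

definition horizon_strategy :: "nat \<Rightarrow> 'v list \<Rightarrow> 'v" where
  "horizon_strategy k h =
     (if length h \<le> k \<and> last h \<in> VMin then Min_choice (k - length h) (last h) else some_succ (last h))"

lemma det_strategy_horizon_strategy: "det_strategy VMin E (horizon_strategy k)"
proof -
  have "horizon_strategy k h \<in> succ (last h)" if "last h \<in> VMin" for h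
    using that Min_choice(1) some_succ[OF Min_vertex_not_target] by (simp add: horizon_strategy_def)
  then show ?thesis
    by (simp add: det_strategy_def succ_def)
qed

theorem Val_d_le_horizon_val: "Val_d VMax VMin T E w v \<le> horizon_val k v"
proof (cases "horizon_val k v < \<infinity>")
  case finite: True
  have "Val_d VMax VMin T E w v \<le> Val_sigma VMax VMin T E w (horizon_strategy k) v"
    unfolding Val_d_def by (rule INF_lower) (simp add: det_strategy_horizon_strategy)
  also have "\<dots> \<le> horizon_val k v"
    unfolding Val_sigma_def
  proof (rule SUP_least)
    fix \<tau> assume "\<tau> \<in> {\<tau>. det_strategy VMax E \<tau>}"
    then have \<tau>: "det_strategy VMax E \<tau>" by simp
    let ?x = "out VMin T v (horizon_strategy k) \<tau>"
    have "TP T w ?x \<le> horizon_val k (?x 0)"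
    proof (rule TP_le_horizon_val)
      fix i assume "i < k" and nT: "?x i \<notin> T"
      then have k_i: "k - i = Suc (k - Suc i)" by simp
      show "wt (?x i) (?x (Suc i)) + horizon_val (k - Suc i) (?x (Suc i)) \<le> horizon_val (k - i) (?x i)"
      proof (cases "?x i \<in> VMin")
        case True
        have "last (det_hist VMin T (horizon_strategy k) \<tau> v i) = ?x i"
          by (simp add: out_def)
        then have "?x (Suc i) = Min_choice (k - Suc i) (?x i)"
          using True nT \<open>i < k\<close> by (simp add: out_Suc horizon_strategy_def length_det_hist)
        then show ?thesis
          using Min_choice(2)[OF True, of "k - Suc i"] by (simp only: k_i order.refl)
      next
        case False
        show ?thesis
          unfolding k_i
          using out_Suc_succ[OF det_strategy_horizon_strategy \<tau> nT] by (rule horizon_val_Max_ge[OF nT False])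
      qed
    qed (use finite in \<open>simp add: out_0\<close>)
    then show "TP T w ?x \<le> horizon_val k v"
      by (simp add: out_0)
  qed
  finally show ?thesis .
qed (simp add: not_less top_unique)

end

section \<open>The memoryless upper bound\<close>

definition mix :: "real \<Rightarrow> 'a \<Rightarrow> 'a \<Rightarrow> 'a pmf" where
  "mix \<delta> x y = map_pmf (\<lambda>b. if b then y else x) (bernoulli_pmf \<delta>)"

lemma set_pmf_mix: "set_pmf (mix \<delta> x y) \<subseteq> {x, y}"
  by (auto simp: mix_def)

lemma integral_mix:
  "0 \<le> \<delta> \<Longrightarrow> \<delta> \<le> 1 \<Longrightarrow> (\<integral>z. (f z :: real) \<partial>measure_pmf (mix \<delta> x y)) = (1 - \<delta>) * f x + \<delta> * f y"
  by (simp add: mix_def integral_map_pmf integral_bernoulli_pmf algebra_simps)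

lemma avoid_prob_Suc_mix_le:
  assumes "u \<notin> T" "K u = mix \<delta> x y" "0 \<le> \<delta>" "\<delta> \<le> 1"
  shows "avoid_prob K T (Suc N) u \<le> 1 - \<delta> + \<delta> * avoid_prob K T N y"
proof -
  have "avoid_prob K T (Suc N) u = (1 - \<delta>) * avoid_prob K T N x + \<delta> * avoid_prob K T N y"
    using assms by (simp add: avoid_prob_Suc integral_mix)
  also have "\<dots> \<le> (1 - \<delta>) * 1 + \<delta> * avoid_prob K T N y"
    using assms(4) avoid_prob_le_1 by (intro add_right_mono mult_left_mono) simp_all
  finally show ?thesis
    by simp
qed

lemma finite_of_ereal_add: "ereal c + x < \<infinity> \<Longrightarrow> x < \<infinity>"
  by (cases x) auto

context shortest_path_game
begin

lemma finite_horizon_val_mono: "horizon_val j u < \<infinity> \<Longrightarrow> j \<le> k \<Longrightarrow> horizon_val k u < \<infinity>"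
  using horizon_val_antimono le_less_trans by blast

definition stable_index :: "nat \<Rightarrow> 'v \<Rightarrow> nat" where
  "stable_index k u = (LEAST j. horizon_val j u = horizon_val k u)"

lemma stable_index_le: "stable_index k u \<le> k"
  unfolding stable_index_def by (rule Least_le) simp

lemma horizon_val_stable_index: "horizon_val (stable_index k u) u = horizon_val k u"
  unfolding stable_index_def by (rule LeastI) simp

lemma stable_index_pos: "horizon_val k u < \<infinity> \<Longrightarrow> u \<notin> T \<Longrightarrow> 0 < stable_index k u"
  using horizon_val_stable_index[of k u] by (cases "stable_index k u") auto

lemma stable_index_T: "u \<in> T \<Longrightarrow> stable_index k u = 0"
  unfolding stable_index_def by (rule Least_eq_0) (simp add: horizon_val_T)

definition attractor_rank :: "'v \<Rightarrow> nat" where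
  "attractor_rank u = (LEAST l. horizon_val l u < \<infinity>)"

lemma attractor_rank_le: "horizon_val l u < \<infinity> \<Longrightarrow> attractor_rank u \<le> l"
  unfolding attractor_rank_def by (rule Least_le)

lemma horizon_val_attractor_rank: "horizon_val k u < \<infinity> \<Longrightarrow> horizon_val (attractor_rank u) u < \<infinity>"
  unfolding attractor_rank_def by (rule LeastI)

lemma attractor_rank_pos: "horizon_val k u < \<infinity> \<Longrightarrow> u \<notin> T \<Longrightarrow> 0 < attractor_rank u"
  using horizon_val_attractor_rank[of k u] by (cases "attractor_rank u") auto

lemma Max_succ_attractor_rank:
  assumes "horizon_val k u < \<infinity>" "u \<notin> T" "u \<notin> VMin" "u' \<in> succ u"
  shows "horizon_val (attractor_rank u - 1) u' < \<infinity>"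
proof -
  have "Suc (attractor_rank u - 1) = attractor_rank u"
    using attractor_rank_pos[OF assms(1,2)] by simp
  then have "wt u u' + horizon_val (attractor_rank u - 1) u' \<le> horizon_val (attractor_rank u) u"
    using horizon_val_Max_ge[OF assms(2-4)] by metis
  then show ?thesis
    using horizon_val_attractor_rank[OF assms(1)] by (auto intro: finite_of_ereal_add le_less_trans)
qed

text \<open>The two moves Min mixes at a vertex with finite horizon-k value: one that is optimal in the
  horizon-k game and one that decreases the attractor rank, i.e. the number of steps within which
  Min can force a visit to T.\<close>

definition Min_opt :: "nat \<Rightarrow> 'v \<Rightarrow> 'v" where
  "Min_opt k u = (SOME u'. u' \<in> succ u \<and>
     horizon_val (stable_index k u) u = wt u u' + horizon_val (stable_index k u - 1) u')"

definition Min_attr :: "'v \<Rightarrow> 'v" where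
  "Min_attr u = (SOME u'. u' \<in> succ u \<and> horizon_val (attractor_rank u - 1) u' < \<infinity>)"

lemma Min_opt:
  assumes "horizon_val k u < \<infinity>" "u \<in> VMin"
  shows "Min_opt k u \<in> succ u"
    and "horizon_val (stable_index k u) u = wt u (Min_opt k u) + horizon_val (stable_index k u - 1) (Min_opt k u)"
proof -
  have "Suc (stable_index k u - 1) = stable_index k u"
    using stable_index_pos assms Min_vertex_not_target by (metis Suc_pred')
  then have "\<exists>u'. u' \<in> succ u \<and> horizon_val (stable_index k u) u = wt u u' + horizon_val (stable_index k u - 1) u'"
    using horizon_val_Min_attained[OF assms(2), of "stable_index k u - 1"] by metis
  then have "Min_opt k u \<in> succ u \<and>
      horizon_val (stable_index k u) u = wt u (Min_opt k u) + horizon_val (stable_index k u - 1) (Min_opt k u)"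
    unfolding Min_opt_def by (rule someI_ex)
  then show "Min_opt k u \<in> succ u"
    and "horizon_val (stable_index k u) u = wt u (Min_opt k u) + horizon_val (stable_index k u - 1) (Min_opt k u)"
    by blast+
qed

lemma Min_attr:
  assumes "horizon_val k u < \<infinity>" "u \<in> VMin"
  shows "Min_attr u \<in> succ u" and "horizon_val (attractor_rank u - 1) (Min_attr u) < \<infinity>"
proof -
  have "Suc (attractor_rank u - 1) = attractor_rank u"
    using attractor_rank_pos assms Min_vertex_not_target by (metis Suc_pred')
  then obtain u' where "u' \<in> succ u" "horizon_val (attractor_rank u) u = wt u u' + horizon_val (attractor_rank u - 1) u'"
    using horizon_val_Min_attained[OF assms(2), of "attractor_rank u - 1"] by metis
  moreover have "horizon_val (attractor_rank u - 1) u' < \<infinity>"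
    using calculation(2) horizon_val_attractor_rank[OF assms(1)] by (simp add: finite_of_ereal_add)
  ultimately have "\<exists>u'. u' \<in> succ u \<and> horizon_val (attractor_rank u - 1) u' < \<infinity>"
    by blast
  then have "Min_attr u \<in> succ u \<and> horizon_val (attractor_rank u - 1) (Min_attr u) < \<infinity>"
    unfolding Min_attr_def by (rule someI_ex)
  then show "Min_attr u \<in> succ u" and "horizon_val (attractor_rank u - 1) (Min_attr u) < \<infinity>"
    by blast+
qed

lemma finite_horizon_val_Min_opt:
  assumes "horizon_val k u < \<infinity>" "u \<in> VMin"
  shows "horizon_val k (Min_opt k u) < \<infinity>"
proof (rule finite_horizon_val_mono)
  show "horizon_val (stable_index k u - 1) (Min_opt k u) < \<infinity>"
    using Min_opt(2)[OF assms] horizon_val_stable_index[of k u] assms(1) finite_of_ereal_add by metis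
  show "stable_index k u - 1 \<le> k"
    using stable_index_le[of k u] by linarith
qed

lemma finite_horizon_val_Min_attr:
  assumes "horizon_val k u < \<infinity>" "u \<in> VMin"
  shows "horizon_val k (Min_attr u) < \<infinity>"
proof (rule finite_horizon_val_mono)
  show "horizon_val (attractor_rank u - 1) (Min_attr u) < \<infinity>"
    by (rule Min_attr(2)[OF assms])
  show "attractor_rank u - 1 \<le> k"
    using attractor_rank_le[OF assms(1)] by linarith
qed

lemma finite_horizon_val_Max_succ:
  assumes "horizon_val k u < \<infinity>" "u \<notin> T" "u \<notin> VMin" "u' \<in> succ u"
  shows "horizon_val k u' < \<infinity>"
proof (rule finite_horizon_val_mono)
  show "horizon_val (attractor_rank u - 1) u' < \<infinity>"
    by (rule Max_succ_attractor_rank[OF assms])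
  show "attractor_rank u - 1 \<le> k"
    using attractor_rank_le[OF assms(1)] by linarith
qed


definition potential :: "nat \<Rightarrow> real \<Rightarrow> 'v \<Rightarrow> real" where
  "potential k a u = (if horizon_val k u < \<infinity> then real_of_ereal (horizon_val k u) + a * real (stable_index k u) else 0)"

lemma horizon_val_move_le:
  assumes finite: "horizon_val k u < \<infinity>" and "u \<notin> T" "u' \<in> succ u"
    and move: "u \<notin> VMin \<or> u' = Min_opt k u"
  shows "wt u u' + horizon_val (stable_index k u - 1) u' \<le> horizon_val k u"
proof (cases "u \<in> VMin")
  case True
  then show ?thesis
    using move Min_opt(2)[OF finite True] horizon_val_stable_index[of k u] by simp
next
  case False
  have "Suc (stable_index k u - 1) = stable_index k u"
    using stable_index_pos[OF finite \<open>u \<notin> T\<close>] by simp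
  then show ?thesis
    using horizon_val_Max_ge[OF \<open>u \<notin> T\<close> False \<open>u' \<in> succ u\<close>, of "stable_index k u - 1"]
      horizon_val_stable_index[of k u]
    by simp
qed

text \<open>Either the integer value horizon_val k drops by at least 1, which pays for any change of the
  bonus term since a (k + 1) \<le> 1, or it stays and the stable index drops.\<close>

lemma potential_decrease:
  assumes finite: "horizon_val k u < \<infinity>" and "u \<notin> T" "u' \<in> succ u"
    and move: "u \<notin> VMin \<or> u' = Min_opt k u" and "0 \<le> a" "a * real (Suc k) \<le> 1"
  shows "real_of_int (w (u, u')) + potential k a u' \<le> potential k a u - a"
proof -
  define j where "j = stable_index k u"
  have "0 < j" "j \<le> k"
    using stable_index_pos[OF finite \<open>u \<notin> T\<close>] stable_index_le by (simp_all add: j_def)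
  have step: "wt u u' + horizon_val (j - 1) u' \<le> horizon_val k u"
    unfolding j_def by (rule horizon_val_move_le[OF assms(1-4)])
  have finite': "horizon_val k u' < \<infinity>"
    using move finite_horizon_val_Min_opt[OF finite] finite_horizon_val_Max_succ[OF finite \<open>u \<notin> T\<close> _ \<open>u' \<in> succ u\<close>]
    by (cases "u \<in> VMin") auto
  have "horizon_val (j - 1) u' < \<infinity>"
    using le_less_trans[OF step finite] by (rule finite_of_ereal_add)
  then obtain p q r :: int where p: "horizon_val k u' = ereal (real_of_int p)"
    and q: "horizon_val (j - 1) u' = ereal (real_of_int q)" and r: "horizon_val k u = ereal (real_of_int r)"
    using horizon_val_int_or_infinity finite finite' by (metis less_irrefl)
  have "w (u, u') + q \<le> r" using step q r by simp
  have "p \<le> q" using horizon_val_antimono[of "j - 1" k u'] \<open>j \<le> k\<close> p q by simp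
  have pot_u: "potential k a u = real_of_int r + a * real j"
    using finite r by (simp add: potential_def j_def)
  have pot_u': "potential k a u' = real_of_int p + a * real (stable_index k u')"
    using finite' p by (simp add: potential_def)
  show ?thesis
  proof (cases "p = q")
    case True
    then have "stable_index k u' \<le> j - 1"
      using p q unfolding stable_index_def by (intro Least_le) simp
    then have "a * real (stable_index k u') \<le> a * real j - a"
      using \<open>0 \<le> a\<close> \<open>0 < j\<close> mult_left_mono[of "real (stable_index k u')" "real j - 1" a]
      by (simp add: of_nat_diff right_diff_distrib)
    then show ?thesis
      using True pot_u pot_u' \<open>w (u, u') + q \<le> r\<close> by linarith
  next
    case False
    then have "w (u, u') + p + 1 \<le> r" using \<open>p \<le> q\<close> \<open>w (u, u') + q \<le> r\<close> by simp
    moreover have "a * real (stable_index k u') \<le> a * real k"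
      using \<open>0 \<le> a\<close> stable_index_le by (simp add: mult_left_mono)
    moreover have "0 \<le> a * real j" using \<open>0 \<le> a\<close> by simp
    ultimately show ?thesis
      using pot_u pot_u' \<open>a * real (Suc k) \<le> 1\<close> by (simp add: algebra_simps)
  qed
qed

definition mixed_strategy :: "nat \<Rightarrow> real \<Rightarrow> 'v \<Rightarrow> 'v pmf" where
  "mixed_strategy k \<delta> u =
     (if horizon_val k u < \<infinity> \<and> u \<in> VMin then mix \<delta> (Min_opt k u) (Min_attr u) else return_pmf (some_succ u))"

lemma mless_strategy_mixed_strategy: "mless_strategy VMin E (mixed_strategy k \<delta>)"
proof -
  have "set_pmf (mixed_strategy k \<delta> u) \<subseteq> succ u" if "u \<in> VMin" for u
  proof (cases "horizon_val k u < \<infinity>")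
    case True
    then have "set_pmf (mixed_strategy k \<delta> u) \<subseteq> {Min_opt k u, Min_attr u}"
      using that set_pmf_mix by (simp add: mixed_strategy_def)
    then show ?thesis
      using Min_opt(1)[OF True that] Min_attr(1)[OF True that] by blast
  next
    case False
    then show ?thesis
      using some_succ[OF Min_vertex_not_target[OF that]] by (simp add: mixed_strategy_def)
  qed
  then show ?thesis
    by (auto simp: mless_strategy_def succ_def)
qed

lemma mixed_kernel_Min:
  "horizon_val k u < \<infinity> \<Longrightarrow> u \<in> VMin \<Longrightarrow>
    mc_kernel VMin T (mixed_strategy k \<delta>) \<tau> u = mix \<delta> (Min_opt k u) (Min_attr u)"
  using Min_vertex_not_target by (simp add: mc_kernel_def mixed_strategy_def)

lemma mixed_kernel_closed:
  assumes "mless_strategy VMax E \<tau>" "horizon_val k u < \<infinity>"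
  shows "set_pmf (mc_kernel VMin T (mixed_strategy k \<delta>) \<tau> u) \<subseteq> {u. horizon_val k u < \<infinity>}"
proof (cases "u \<in> T")
  case nT: False
  show ?thesis
  proof (cases "u \<in> VMin")
    case True
    then show ?thesis
      using set_pmf_mix mixed_kernel_Min[OF assms(2) True]
        finite_horizon_val_Min_opt[OF assms(2) True] finite_horizon_val_Min_attr[OF assms(2) True]
      by fastforce
  next
    case False
    then show ?thesis
      using set_pmf_kernel_Max[OF assms(1) nT False] finite_horizon_val_Max_succ[OF assms(2) nT False] by blast
  qed
qed (use assms in \<open>simp add: mc_kernel_def\<close>)

text \<open>Max cannot increase the attractor rank, and with probability \<delta> Min decreases it.\<close>

lemma avoid_prob_mixed_kernel_le:
  assumes "0 < \<delta>" "\<delta> \<le> 1" and \<tau>: "mless_strategy VMax E \<tau>"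
  shows "horizon_val k u < \<infinity> \<Longrightarrow> attractor_rank u \<le> l \<Longrightarrow>
    avoid_prob (mc_kernel VMin T (mixed_strategy k \<delta>) \<tau>) T (Suc l) u \<le> 1 - \<delta> ^ l"
proof (induction l arbitrary: u)
  case 0
  then have "u \<in> T"
    using horizon_val_attractor_rank[OF "0.prems"(1)] by (cases "u \<in> T") auto
  then show ?case by (simp add: avoid_prob_Suc)
next
  case (Suc l)
  let ?K = "mc_kernel VMin T (mixed_strategy k \<delta>) \<tau>"
  have "\<delta> ^ Suc l \<le> \<delta> ^ l" "\<delta> ^ Suc l \<le> 1"
    using assms by (simp add: mult_left_le_one_le, intro power_le_one) simp_all
  consider "u \<in> T" | "u \<notin> T" "u \<in> VMin" | "u \<notin> T" "u \<notin> VMin"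
    by blast
  then show ?case
  proof cases
    case 1
    then show ?thesis
      using \<open>\<delta> ^ Suc l \<le> 1\<close> by (simp add: avoid_prob_Suc)
  next
    case 2
    have "attractor_rank (Min_attr u) \<le> l"
      using attractor_rank_le[OF Min_attr(2)[OF Suc.prems(1) 2(2)]] Suc.prems(2) by linarith
    then have "avoid_prob ?K T (Suc l) (Min_attr u) \<le> 1 - \<delta> ^ l"
      by (rule Suc.IH[OF finite_horizon_val_Min_attr[OF Suc.prems(1) 2(2)]])
    then have "\<delta> * avoid_prob ?K T (Suc l) (Min_attr u) \<le> \<delta> * (1 - \<delta> ^ l)"
      using \<open>0 < \<delta>\<close> by (simp add: mult_left_mono)
    moreover have "avoid_prob ?K T (Suc (Suc l)) u \<le> 1 - \<delta> + \<delta> * avoid_prob ?K T (Suc l) (Min_attr u)"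
      using assms by (intro avoid_prob_Suc_mix_le[where K = ?K, OF 2(1) mixed_kernel_Min[OF Suc.prems(1) 2(2)]]) simp_all
    ultimately show ?thesis
      by (simp add: algebra_simps)
  next
    case 3
    have "avoid_prob ?K T (Suc l) u' \<le> 1 - \<delta> ^ l" if "u' \<in> succ u" for u'
    proof (rule Suc.IH)
      show "horizon_val k u' < \<infinity>" "attractor_rank u' \<le> l"
        using finite_horizon_val_Max_succ[OF Suc.prems(1) 3 that]
          attractor_rank_le[OF Max_succ_attractor_rank[OF Suc.prems(1) 3 that]] Suc.prems(2)
        by simp_all
    qed
    then show ?thesis
      using set_pmf_kernel_Max[OF \<tau> 3] \<open>\<delta> ^ Suc l \<le> \<delta> ^ l\<close>
      by (intro avoid_prob_Suc_le[OF 3(1)]) fastforce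
  qed
qed


text \<open>The move Min_attr may increase the potential by up to the sum S of all absolute weights and
  twice all absolute potential values; for small \<delta> this is compensated by the decrease a along
  Min_opt.\<close>

lemma mixed_kernel_potential:
  assumes \<tau>: "mless_strategy VMax E \<tau>" and finite: "horizon_val k u < \<infinity>" and "u \<notin> T"
    and "0 \<le> a" "a * real (Suc k) \<le> 1" and "0 \<le> \<delta>" "\<delta> \<le> 1"
    and \<delta>_small: "\<delta> * ((\<Sum>e\<in>UNIV. \<bar>real_of_int (w e)\<bar>) + 2 * (\<Sum>u\<in>UNIV. \<bar>potential k a u\<bar>) + a) \<le> a"
  shows "(\<integral>u'. real_of_int (w (u, u')) + potential k a u' \<partial>measure_pmf (mc_kernel VMin T (mixed_strategy k \<delta>) \<tau> u))
    \<le> potential k a u"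
proof (cases "u \<in> VMin")
  case True
  let ?S = "(\<Sum>e\<in>UNIV. \<bar>real_of_int (w e)\<bar>) + 2 * (\<Sum>u\<in>UNIV. \<bar>potential k a u\<bar>)"
  have "real_of_int (w (u, Min_opt k u)) + potential k a (Min_opt k u) \<le> potential k a u - a"
    using Min_opt(1)[OF finite True] assms by (intro potential_decrease) auto
  moreover have "real_of_int (w (u, Min_attr u)) + potential k a (Min_attr u) \<le> potential k a u + ?S"
    using member_le_sum[of "(u, Min_attr u)" UNIV "\<lambda>e. \<bar>real_of_int (w e)\<bar>"]
      member_le_sum[of "Min_attr u" UNIV "\<lambda>u. \<bar>potential k a u\<bar>"] member_le_sum[of u UNIV "\<lambda>u. \<bar>potential k a u\<bar>"]
    by simp
  ultimately have "(1 - \<delta>) * (real_of_int (w (u, Min_opt k u)) + potential k a (Min_opt k u))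
      + \<delta> * (real_of_int (w (u, Min_attr u)) + potential k a (Min_attr u))
      \<le> (1 - \<delta>) * (potential k a u - a) + \<delta> * (potential k a u + ?S)"
    using \<open>0 \<le> \<delta>\<close> \<open>\<delta> \<le> 1\<close> by (intro add_mono[OF mult_left_mono mult_left_mono]) auto
  also have "\<dots> \<le> potential k a u"
    using \<delta>_small by (simp add: algebra_simps)
  finally show ?thesis
    by (simp add: mixed_kernel_Min[OF finite True] integral_mix[OF \<open>0 \<le> \<delta>\<close> \<open>\<delta> \<le> 1\<close>])
next
  case False
  have "real_of_int (w (u, u')) + potential k a u' \<le> potential k a u"
    if "u' \<in> set_pmf (mc_kernel VMin T (mixed_strategy k \<delta>) \<tau> u)" for u'
  proof -
    have "u' \<in> succ u"
      using that set_pmf_kernel_Max[OF \<tau> \<open>u \<notin> T\<close> False] by blast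
    then show ?thesis
      using potential_decrease[OF finite \<open>u \<notin> T\<close>, of u' a] False \<open>0 \<le> a\<close> \<open>a * real (Suc k) \<le> 1\<close>
      by simp
  qed
  then show ?thesis
    by (intro measure_pmf.integral_le_const) (auto simp: AE_measure_pmf_iff integrable_measure_pmf_finite)
qed

lemma Val_m_rho_mixed_strategy_le_potential:
  assumes finite: "horizon_val k v < \<infinity>" and "0 \<le> a" "a * real (Suc k) \<le> 1" and "0 < \<delta>" "\<delta> \<le> 1"
    and \<delta>_small: "\<delta> * ((\<Sum>e\<in>UNIV. \<bar>real_of_int (w e)\<bar>) + 2 * (\<Sum>u\<in>UNIV. \<bar>potential k a u\<bar>) + a) \<le> a"
  shows "Val_m_rho VMax VMin T E w (mixed_strategy k \<delta>) v \<le> ereal (potential k a v)"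
  unfolding Val_m_rho_def
proof (rule SUP_least)
  let ?A = "{u. horizon_val k u < \<infinity>}"
  fix \<tau> assume "\<tau> \<in> {\<tau>. mless_strategy VMax E \<tau>}"
  then have \<tau>: "mless_strategy VMax E \<tau>" by simp
  show "exp_TP T w (mc_paths (mc_kernel VMin T (mixed_strategy k \<delta>) \<tau>) v) \<le> ereal (potential k a v)"
  proof (rule exp_TP_le_potential[where A = ?A and m = "Suc k" and q = "1 - \<delta> ^ k"])
    show "set_pmf (mc_kernel VMin T (mixed_strategy k \<delta>) \<tau> u) \<subseteq> ?A" if "u \<in> ?A" for u
      by (rule mixed_kernel_closed[OF \<tau>]) (use that in simp)
    show "potential k a t = 0" if "t \<in> T" for t
      using that by (simp add: potential_def horizon_val_T stable_index_T)
    show "(\<integral>u'. real_of_int (w (u, u')) + potential k a u'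
        \<partial>measure_pmf (mc_kernel VMin T (mixed_strategy k \<delta>) \<tau> u)) \<le> potential k a u"
      if "u \<in> ?A" "u \<notin> T" for u
      using that assms by (intro mixed_kernel_potential[OF \<tau>]) simp_all
    show "avoid_prob (mc_kernel VMin T (mixed_strategy k \<delta>) \<tau>) T (Suc k) u \<le> 1 - \<delta> ^ k"
      if "u \<in> ?A" for u
      using that assms by (intro avoid_prob_mixed_kernel_le[OF _ _ \<tau>] attractor_rank_le) simp_all
  qed (use \<open>0 < \<delta>\<close> finite in simp_all)
qed

lemma potential_le: "horizon_val k v < \<infinity> \<Longrightarrow> 0 \<le> a \<Longrightarrow> ereal (potential k a v) \<le> horizon_val k v + ereal (a * real k)"
  using horizon_val_int_or_infinity[of k v] stable_index_le[of k v]
  by (auto simp: potential_def mult_left_mono)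

theorem Val_m_upper_le_horizon_val:
  assumes finite: "horizon_val k v < \<infinity>" and "0 < \<epsilon>"
  shows "Val_m_upper VMax VMin T E w v \<le> horizon_val k v + ereal \<epsilon>"
proof -
  define a where "a = min \<epsilon> 1 / real (Suc k)"
  define S where "S = (\<Sum>e\<in>UNIV. \<bar>real_of_int (w e)\<bar>) + 2 * (\<Sum>u\<in>UNIV. \<bar>potential k a u\<bar>)"
  define \<delta> where "\<delta> = a / (S + a)"
  have "0 < a" and "a * real (Suc k) = min \<epsilon> 1"
    using \<open>0 < \<epsilon>\<close> by (simp_all add: a_def)
  then have "a * real (Suc k) \<le> 1" "a * real k \<le> \<epsilon>"
    using mult_left_mono[of "real k" "real (Suc k)" a] by simp_all
  have "0 \<le> S"
    unfolding S_def by (simp add: sum_nonneg)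
  then have "0 < \<delta>" "\<delta> \<le> 1" "\<delta> * (S + a) \<le> a"
    using \<open>0 < a\<close> by (simp_all add: \<delta>_def)
  have "Val_m_upper VMax VMin T E w v \<le> Val_m_rho VMax VMin T E w (mixed_strategy k \<delta>) v"
    unfolding Val_m_upper_def by (rule INF_lower) (simp add: mless_strategy_mixed_strategy)
  also have "\<dots> \<le> ereal (potential k a v)"
    using finite \<open>0 < a\<close> \<open>a * real (Suc k) \<le> 1\<close> \<open>0 < \<delta>\<close> \<open>\<delta> \<le> 1\<close> \<open>\<delta> * (S + a) \<le> a\<close>
    by (intro Val_m_rho_mixed_strategy_le_potential) (simp_all add: S_def)
  also have "\<dots> \<le> horizon_val k v + ereal \<epsilon>"
    using potential_le[OF finite] \<open>0 < a\<close> \<open>a * real k \<le> \<epsilon>\<close>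
    by (meson add_left_mono ereal_less_eq(3) less_imp_le order.trans)
  finally show ?thesis .
qed

lemma Val_m_upper_le_lim_val: "Val_m_upper VMax VMin T E w v \<le> lim_val v"
  unfolding lim_val_def
proof (rule INF_greatest)
  fix k
  show "Val_m_upper VMax VMin T E w v \<le> horizon_val k v"
  proof (cases "horizon_val k v < \<infinity>")
    case True
    show ?thesis
      by (rule ereal_le_epsilon2) (simp add: Val_m_upper_le_horizon_val[OF True])
  qed (simp add: not_less top_unique)
qed

theorem Val_d_eq_Val_m_upper: "Val_d VMax VMin T E w v = Val_m_upper VMax VMin T E w v"
proof -
  have "Val_d VMax VMin T E w v \<le> lim_val v"
    unfolding lim_val_def by (rule INF_greatest) (rule Val_d_le_horizon_val)
  then have "Val_d VMax VMin T E w v = lim_val v"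
    using lim_val_le_Val_d by (rule antisym)
  moreover have "lim_val v \<le> Val_m_upper VMax VMin T E w v"
    unfolding Val_m_upper_def by (rule INF_greatest) (simp add: lim_val_le_Val_m_rho)
  then have "lim_val v = Val_m_upper VMax VMin T E w v"
    using Val_m_upper_le_lim_val by (rule antisym)
  ultimately show ?thesis
    by simp
qed

end

theorem theorem6:
  fixes VMax VMin T :: "'v::finite set" and E :: "('v \<times> 'v) set" and w :: "'v \<times> 'v \<Rightarrow> int"
  assumes "spg VMax VMin T E"
  shows "\<forall>v. Val_d VMax VMin T E w v = Val_m_upper VMax VMin T E w v"
proof -
  interpret shortest_path_game VMax VMin T E w
    using assms by unfold_locales
  show ?thesis
    using Val_d_eq_Val_m_upper by blast
qed
end
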